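(* Let $R$ be a commutative integral domain with identity, $\Gamma$ a discrete group, and $(\mathcal{G},c)\in\mathcal{C}_{R,\Gamma}$. Let $T=\{((m,n),g,x): g\in\Gamma,\ (m,n)\in N_R(\mathcal{G})_g,\ x\in s(\operatorname{supp}(m))\}$. (1) The relation on $T$ given by $((m_1,n_1),g_1,x_1)\sim((m_2,n_2),g_2,x_2)$ iff $x_1=x_2$ and there is a compact open neighbourhood $U\subseteq\mathcal{G}^0$ of $x_1$ with $m_1 1_U n_2\in D_R(\mathcal{G})$ is an equivalence relation. (2) Let $W_\mathcal{G}=T/\sim$. There is a bijection $\psi_\mathcal{G}:W_\mathcal{G}\to\mathcal{G}$ such that $\psi_\mathcal{G}([((m,n),g,x)])\in\operatorname{supp}(m)\cap s^{-1}(\{x\})$ for all $((m,n),g,x)\in T$, and such that $\psi_\mathcal{G}([((1_A,1_{A^{-1}}),c(\eta),s(\eta))])=\eta$ for every $\eta\in\mathcal{G}$ and every compact open bisection $A$ containing $\eta$ with $c(A)=\{c(\eta)\}$. (3) For $[((m,n),g,x)]\in W_\mathcal{G}$, $\psi_\mathcal{G}([((m,n),g,x)])^{-1}=\psi_\mathcal{G}([((n,m),g^{-1},\alpha_{\operatorname{supp}(m)}(x))])$. (4) For $i=1,2$ let $[((m_i,n_i),g_i,x_i)]\in W_\mathcal{G}$ and $\eta_i=\psi_\mathcal{G}([((m_i,n_i),g_i,x_i)])$. Then $(\eta_1,\eta_2)$ is composable iff $x_1=\alpha_{\operatorname{supp}(m_2)}(x_2)$, in which case $((m_1m_2,n_2n_1),g_1g_2,x_2)\in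 T$ and $\eta_1\eta_2=\psi_\mathcal{G}([((m_1m_2,n_2n_1),g_1g_2,x_2)])$. (5) $c(\psi_\mathcal{G}([((m,n),g,x)]))=g$ for all $[((m,n),g,x)]\in W_\mathcal{G}$. (6) If $g\in\Gamma$ and $A\subseteq c^{-1}(g)$ is a compact open bisection, then $\psi_\mathcal{G}^{-1}(A)=\{[((m,n),g,x)]\in W_\mathcal{G}:\operatorname{supp}(m)\subseteq A\}$.
   Context: Ample Hausdorff groupoid: Hausdorff topological groupoid with range/source maps $r,s$ local homeomorphisms and unit space $\mathcal{G}^0$ having a basis of compact open sets; a bisection is a subset on which $r,s$ restrict to homeomorphisms onto open subsets of $\mathcal{G}^0$; for an open bisection $A$, $\alpha_A:s(A)\to r(A)$ is the homeomorphism $\alpha_A(s(\eta))=r(\eta)$, $\eta\in A$. $\mathcal{G}_x^x=\{\eta:s(\eta)=r(\eta)=x\}$. A continuous cocycle is a continuous groupoid homomorphism $c:\mathcal{G}\to\Gamma$. $A_R(\mathcal{G})$: locally constant compactly supported functions $\mathcal{G}\to R$ with pointwise addition and convolution $(f*g)(\eta)=\sum_{\alpha\beta=\eta}f(\alpha)g(\beta)$; $D_R(\mathcal{G})$: those supported in $\mathcal{G}^0$; $\operatorname{supp}(f)=\{\eta:f(\eta)\neq0\}$; $1_U$ the indicator of $U$; $A_R(\mathcal{G})_g=\{f:\operatorname{supp}(f)\subseteq c^{-1}(g)\}$. $\mathcal{C}_{R,\Gamma}$: pairs $(\mathcal{G},c)$ with $\mathcal{G}$ ample Hausdorff, $c:\mathcal{G}\to\Gamma$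 a continuous cocycle, and a dense $X\subseteq\mathcal{G}^0$ such that the group ring $R(c^{-1}(e)\cap\mathcal{G}_x^x)$ has no zero-divisors and only trivial units (units of the form $uh$, $u\in R$, $h$ in the group) for all $x\in X$. A normaliser is a pair $(m,n)\in A_R(\mathcal{G})^2$ with $mD_R(\mathcal{G})n\cup nD_R(\mathcal{G})m\subseteq D_R(\mathcal{G})$, $mnm=m$, $nmn=n$; $N_R(\mathcal{G})_g$ is the set of normalisers in $A_R(\mathcal{G})_g\times A_R(\mathcal{G})_{g^{-1}}$. (For $(m,n)\in N_R(\mathcal{G})_g$, $\operatorname{supp}(m)$ is a compact open bisection.) *)

theory Defs
  imports "HOL-Analysis.Analysis"
begin

text \<open>A groupoid whose set of arrows is the whole (topological) type 'g,
  given by range, source, (partial) multiplication and inverse.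
  The product mu a b is only meaningful when sr a = rg b.\<close>

record 'g gpd =
  rg :: "'g \<Rightarrow> 'g"
  sr :: "'g \<Rightarrow> 'g"
  mu :: "'g \<Rightarrow> 'g \<Rightarrow> 'g"
  iv :: "'g \<Rightarrow> 'g"

definition unit_space :: "'g gpd \<Rightarrow> 'g set" where
  "unit_space G = range (rg G)"

definition groupoid :: "'g gpd \<Rightarrow> bool" where
  "groupoid G \<longleftrightarrow>
     (\<forall>a. rg G (rg G a) = rg G a \<and> sr G (rg G a) = rg G a
          \<and> rg G (sr G a) = sr G a \<and> sr G (sr G a) = sr G a)
   \<and> (\<forall>a b. sr G a = rg G b \<longrightarrow> rg G (mu G a b) = rg G a \<and> sr G (mu G a b) = sr G b)
   \<and> (\<forall>a b d. sr G a = rg G b \<and> sr G b = rg G d \<longrightarrow>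
          mu G (mu G a b) d = mu G a (mu G b d))
   \<and> (\<forall>a. mu G (rg G a) a = a \<and> mu G a (sr G a) = a)
   \<and> (\<forall>a. sr G (iv G a) = rg G a \<and> rg G (iv G a) = sr G a
          \<and> mu G a (iv G a) = rg G a \<and> mu G (iv G a) a = sr G a)"

definition local_homeo :: "('g::topological_space) gpd \<Rightarrow> ('g \<Rightarrow> 'g) \<Rightarrow> bool" where
  "local_homeo G f \<longleftrightarrow>
     (\<forall>a. \<exists>U. open U \<and> a \<in> U \<and> openin (top_of_set (unit_space G)) (f ` U)
          \<and> homeomorphism U (f ` U) f (inv_into U f))"

definition ample_hausdorff :: "('g::t2_space) gpd \<Rightarrow> bool" where
  "ample_hausdorff G \<longleftrightarrow>
     groupoid G
   \<and> continuous_on {p. sr G (fst p) = rg G (snd p)} (\<lambda>p. mu G (fst p) (snd p))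
   \<and> continuous_on UNIV (iv G)
   \<and> local_homeo G (rg G) \<and> local_homeo G (sr G)
   \<and> (\<forall>V x. openin (top_of_set (unit_space G)) V \<and> x \<in> V \<longrightarrow>
        (\<exists>K. compact K \<and> openin (top_of_set (unit_space G)) K \<and> x \<in> K \<and> K \<subseteq> V))"

definition bisection :: "('g::topological_space) gpd \<Rightarrow> 'g set \<Rightarrow> bool" where
  "bisection G B \<longleftrightarrow>
     homeomorphism B (rg G ` B) (rg G) (inv_into B (rg G))
   \<and> homeomorphism B (sr G ` B) (sr G) (inv_into B (sr G))
   \<and> openin (top_of_set (unit_space G)) (rg G ` B)
   \<and> openin (top_of_set (unit_space G)) (sr G ` B)"

definition cobis :: "('g::topological_space) gpd \<Rightarrow> 'g set \<Rightarrow> bool" where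
  "cobis G A \<longleftrightarrow> compact A \<and> open A \<and> bisection G A"

definition alpha :: "'g gpd \<Rightarrow> 'g set \<Rightarrow> 'g \<Rightarrow> 'g" where
  "alpha G A y = rg G (THE \<eta>. \<eta> \<in> A \<and> sr G \<eta> = y)"

text \<open>Continuous cocycle into a discrete group (written additively).\<close>
definition cont_cocycle :: "('g::topological_space) gpd \<Rightarrow> ('g \<Rightarrow> 'a::group_add) \<Rightarrow> bool" where
  "cont_cocycle G c \<longleftrightarrow>
     (\<forall>a b. sr G a = rg G b \<longrightarrow> c (mu G a b) = c a + c b)
   \<and> (\<forall>g. open (c -` {g}))"

definition fsupp :: "('g \<Rightarrow> 'r::zero) \<Rightarrow> 'g set" where
  "fsupp f = {x. f x \<noteq> 0}"

definition steinberg :: "('g::topological_space) gpd \<Rightarrow> ('g \<Rightarrow> 'r::comm_ring_1) set" where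
  "steinberg G = {f. (\<forall>a. \<exists>U. open U \<and> a \<in> U \<and> (\<forall>b\<in>U. f b = f a)) \<and> compact (fsupp f)}"

definition conv :: "'g gpd \<Rightarrow> ('g \<Rightarrow> 'r::comm_ring_1) \<Rightarrow> ('g \<Rightarrow> 'r) \<Rightarrow> 'g \<Rightarrow> 'r" where
  "conv G f g \<eta> = (\<Sum>p \<in> {(a,b). sr G a = rg G b \<and> mu G a b = \<eta> \<and> f a \<noteq> 0 \<and> g b \<noteq> 0}.
                       f (fst p) * g (snd p))"

definition diag :: "('g::topological_space) gpd \<Rightarrow> ('g \<Rightarrow> 'r::comm_ring_1) set" where
  "diag G = {f \<in> steinberg G. fsupp f \<subseteq> unit_space G}"

definition homog :: "('g::topological_space) gpd \<Rightarrow> ('g \<Rightarrow> 'a) \<Rightarrow> 'a \<Rightarrow> ('g \<Rightarrow> 'r::comm_ring_1) set" where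
  "homog G c g = {f \<in> steinberg G. fsupp f \<subseteq> c -` {g}}"

definition normaliser :: "('g::topological_space) gpd \<Rightarrow> ('g \<Rightarrow> 'r::comm_ring_1) \<Rightarrow> ('g \<Rightarrow> 'r) \<Rightarrow> bool" where
  "normaliser G m n \<longleftrightarrow> m \<in> steinberg G \<and> n \<in> steinberg G
     \<and> (\<forall>d \<in> diag G. conv G (conv G m d) n \<in> diag G \<and> conv G (conv G n d) m \<in> diag G)
     \<and> conv G (conv G m n) m = m \<and> conv G (conv G n m) n = n"

definition normalisers :: "('g::topological_space) gpd \<Rightarrow> ('g \<Rightarrow> 'a::group_add) \<Rightarrow> 'a
     \<Rightarrow> (('g \<Rightarrow> 'r::comm_ring_1) \<times> ('g \<Rightarrow> 'r)) set" where
  "normalisers G c g = {(m,n). normaliser G m n \<and> m \<in> homog G c g \<and> n \<in> homog G c (- g)}"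

definition Tset :: "('g::topological_space) gpd \<Rightarrow> ('g \<Rightarrow> 'a::group_add)
     \<Rightarrow> ((('g \<Rightarrow> 'r::comm_ring_1) \<times> ('g \<Rightarrow> 'r)) \<times> 'a \<times> 'g) set" where
  "Tset G c = {((m,n),g,x). (m,n) \<in> normalisers G c g \<and> x \<in> sr G ` fsupp m}"

definition Trel :: "('g::topological_space) gpd \<Rightarrow> ('g \<Rightarrow> 'a::group_add)
     \<Rightarrow> (((('g \<Rightarrow> 'r::comm_ring_1) \<times> ('g \<Rightarrow> 'r)) \<times> 'a \<times> 'g)
         \<times> ((('g \<Rightarrow> 'r) \<times> ('g \<Rightarrow> 'r)) \<times> 'a \<times> 'g)) set" where
  "Trel G c = {(((m1,n1),g1,x1),((m2,n2),g2,x2)).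
      ((m1,n1),g1,x1) \<in> Tset G c \<and> ((m2,n2),g2,x2) \<in> Tset G c \<and> x1 = x2
    \<and> (\<exists>U. compact U \<and> open U \<and> U \<subseteq> unit_space G \<and> x1 \<in> U
          \<and> conv G (conv G m1 (indicator U)) n2 \<in> diag G)}"

text \<open>Group ring R(H) of a subgroup H of an isotropy group G_x^x (identity x):
  finitely supported functions H \<rightarrow> R with convolution.\<close>
definition grp_ring :: "'g set \<Rightarrow> ('g \<Rightarrow> 'r::comm_ring_1) set" where
  "grp_ring H = {f. finite (fsupp f) \<and> fsupp f \<subseteq> H}"

definition grp_conv :: "'g gpd \<Rightarrow> 'g set \<Rightarrow> ('g \<Rightarrow> 'r::comm_ring_1) \<Rightarrow> ('g \<Rightarrow> 'r) \<Rightarrow> 'g \<Rightarrow> 'r" where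
  "grp_conv G H f g h = (\<Sum>p \<in> {(a,b). a \<in> H \<and> b \<in> H \<and> mu G a b = h \<and> f a \<noteq> 0 \<and> g b \<noteq> 0}.
                           f (fst p) * g (snd p))"

definition grp_ring_good :: "'g gpd \<Rightarrow> 'g set \<Rightarrow> 'g \<Rightarrow> 'r::comm_ring_1 itself \<Rightarrow> bool" where
  "grp_ring_good G H x (_::'r itself) \<longleftrightarrow>
     (\<forall>f \<in> (grp_ring H :: ('g \<Rightarrow> 'r) set). \<forall>g \<in> grp_ring H.
        f \<noteq> (\<lambda>_. 0) \<longrightarrow> g \<noteq> (\<lambda>_. 0) \<longrightarrow> grp_conv G H f g \<noteq> (\<lambda>_. 0))
   \<and> (\<forall>f \<in> (grp_ring H :: ('g \<Rightarrow> 'r) set).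
        (\<exists>g \<in> grp_ring H. grp_conv G H f g = (\<lambda>k. if k = x then 1 else 0)
                          \<and> grp_conv G H g f = (\<lambda>k. if k = x then 1 else 0))
        \<longrightarrow> (\<exists>u h. h \<in> H \<and> f = (\<lambda>k. if k = h then u else 0)))"

definition classC :: "('g::t2_space) gpd \<Rightarrow> ('g \<Rightarrow> 'a::group_add) \<Rightarrow> 'r::comm_ring_1 itself \<Rightarrow> bool" where
  "classC G c R \<longleftrightarrow> ample_hausdorff G \<and> cont_cocycle G c
     \<and> (\<exists>X. X \<subseteq> unit_space G \<and> unit_space G \<subseteq> closure X
          \<and> (\<forall>x\<in>X. grp_ring_good G (c -` {0} \<inter> {\<eta>. sr G \<eta> = x \<and> rg G \<eta> = x}) x R))"

end

theory Submission
  imports Defs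
begin

text \<open>
  Let (m, n) be a normaliser of degree g. At a unit z where the group ring of
  H = c\<inverse>(0) \<inter> G_z^z is a domain with trivial units, pick \<gamma> \<in> supp m over z. A zero-divisor
  argument shows that all arrows of supp m over z have the source of \<gamma>, and then evaluating the
  normaliser identities by convolution over the isotropy shows that the slices h \<mapsto> m(h \<gamma>)
  and h \<mapsto> n(\<gamma>\<inverse> h) are mutually inverse in R(H); hence the first is a point mass, i.e. \<gamma> is
  the only arrow of supp m over z, and n(\<gamma>\<inverse>) \<noteq> 0. Since such units are dense and supports
  are open, supp m is a bisection, supp n = (supp m)\<inverse> and m(\<gamma>) n(\<gamma>\<inverse>) = 1 on supp m.

  So a triple ((m, n), g, x) singles out the arrow of supp m with source x, and two triples are
  equivalent exactly when these arrows agree; \<psi> maps a class to this arrow. It is onto because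
  indicators of small homogeneous bisections are normalisers, and its compatibility with
  inverses, products and the cocycle is read off from the bisection property.
\<close>

locale groupoid_structure =
  fixes G :: "'g gpd"
  assumes groupoid: "groupoid G"
begin

abbreviation G0 :: "'g set" where "G0 \<equiv> unit_space G"

lemma rg_rg [simp]: "rg G (rg G a) = rg G a"
  and sr_rg [simp]: "sr G (rg G a) = rg G a"
  and rg_sr [simp]: "rg G (sr G a) = sr G a"
  and sr_sr [simp]: "sr G (sr G a) = sr G a"
  using groupoid unfolding groupoid_def by auto

lemma rg_mu: "sr G a = rg G b \<Longrightarrow> rg G (mu G a b) = rg G a"
  and sr_mu: "sr G a = rg G b \<Longrightarrow> sr G (mu G a b) = sr G b"
  using groupoid unfolding groupoid_def by auto

lemma mu_assoc:
  "sr G a = rg G b \<Longrightarrow> sr G b = rg G d \<Longrightarrow> mu G (mu G a b) d = mu G a (mu G b d)"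
  using groupoid unfolding groupoid_def by blast

lemma mu_rg [simp]: "mu G (rg G a) a = a"
  and mu_sr [simp]: "mu G a (sr G a) = a"
  using groupoid unfolding groupoid_def by auto

lemma mu_rg_eq: "rg G a = u \<Longrightarrow> mu G u a = a"
  and mu_sr_eq: "sr G a = u \<Longrightarrow> mu G a u = a"
  by auto

lemma sr_iv [simp]: "sr G (iv G a) = rg G a"
  and rg_iv [simp]: "rg G (iv G a) = sr G a"
  and mu_iv [simp]: "mu G a (iv G a) = rg G a"
  and iv_mu [simp]: "mu G (iv G a) a = sr G a"
  using groupoid unfolding groupoid_def by auto

lemma unit_space_iff: "u \<in> G0 \<longleftrightarrow> rg G u = u"
  unfolding unit_space_def by (auto, metis rangeI)

lemma rg_unit: "u \<in> G0 \<Longrightarrow> rg G u = u"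
  and sr_unit: "u \<in> G0 \<Longrightarrow> sr G u = u"
  by (simp_all add: unit_space_iff) (metis sr_rg)

lemma unit_sr_eq_rg: "u \<in> G0 \<Longrightarrow> sr G u = rg G u"
  by (simp add: rg_unit sr_unit)

lemma rg_in_unit_space [simp]: "rg G a \<in> G0"
  and sr_in_unit_space [simp]: "sr G a \<in> G0"
  by (simp_all add: unit_space_iff)

lemma mu_cancel_left:
  "sr G a = rg G b \<Longrightarrow> sr G a = rg G b' \<Longrightarrow> mu G a b = mu G a b' \<Longrightarrow> b = b'"
  by (metis mu_assoc iv_mu mu_rg sr_iv)

lemma mu_cancel_right:
  "sr G b = rg G a \<Longrightarrow> sr G b' = rg G a \<Longrightarrow> mu G b a = mu G b' a \<Longrightarrow> b = b'"
  by (metis mu_assoc mu_iv mu_sr rg_iv)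

lemma iv_iv [simp]: "iv G (iv G a) = a"
proof -
  have "iv G (iv G a) = mu G (iv G (iv G a)) (mu G (iv G a) a)"
    using mu_sr[of "iv G (iv G a)"] by simp
  also have "\<dots> = mu G (mu G (iv G (iv G a)) (iv G a)) a"
    by (rule mu_assoc[symmetric]) simp_all
  finally show ?thesis by simp
qed

lemma iv_inj: "iv G a = iv G b \<Longrightarrow> a = b"
  by (metis iv_iv)

lemma iv_image_eq_vimage: "iv G ` A = iv G -` A"
  by (auto intro: image_eqI[of _ "iv G", OF iv_iv[symmetric]])

lemma inj_on_rg_iv_image: "inj_on (rg G) (iv G ` A) \<longleftrightarrow> inj_on (sr G) A"
  and inj_on_sr_iv_image: "inj_on (sr G) (iv G ` A) \<longleftrightarrow> inj_on (rg G) A"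
  by (auto simp: inj_on_def dest: iv_inj)

lemma mu_in_unit_space_imp_eq_iv: "sr G a = rg G b \<Longrightarrow> mu G a b \<in> G0 \<Longrightarrow> b = iv G a"
  by (metis mu_cancel_left mu_iv rg_iv rg_mu rg_unit)

lemma iv_mu_distrib: "sr G a = rg G b \<Longrightarrow> iv G (mu G a b) = mu G (iv G b) (iv G a)"
proof -
  assume ab: "sr G a = rg G b"
  have "mu G (mu G a b) (mu G (iv G b) (iv G a)) = rg G (mu G a b)"
    using ab by (metis mu_assoc mu_iv mu_sr rg_iv sr_iv sr_mu rg_mu)
  then have "mu G (iv G b) (iv G a) = iv G (mu G a b)"
    using ab by (intro mu_in_unit_space_imp_eq_iv) (auto simp: sr_mu rg_mu)
  then show ?thesis by simp
qed

lemma iv_unit: "u \<in> G0 \<Longrightarrow> iv G u = u"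
  by (metis iv_mu mu_sr sr_iv rg_unit sr_unit mu_rg)

lemma mu_iv_mu: "rg G a = rg G b \<Longrightarrow> mu G a (mu G (iv G a) b) = b"
  by (metis mu_assoc mu_iv mu_rg rg_iv sr_iv)

lemma iv_mu_mu: "sr G a = rg G b \<Longrightarrow> mu G (iv G a) (mu G a b) = b"
  by (metis mu_assoc iv_mu mu_rg sr_iv)

lemma mu_mu_iv:
  assumes "sr G a = sr G b"
  shows "mu G (mu G a (iv G b)) b = a"
proof -
  have "mu G (mu G a (iv G b)) b = mu G a (sr G b)" using assms by (simp add: mu_assoc)
  then show ?thesis using assms mu_sr[of a] by simp
qed

lemma conjugate_in_unit_space_imp_unit:
  assumes "sr G k = rg G \<gamma>" "rg G k = rg G \<gamma>" "mu G (iv G \<gamma>) (mu G k \<gamma>) \<in> G0"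
  shows "k = rg G \<gamma>"
proof -
  have "mu G k \<gamma> = iv G (iv G \<gamma>)"
    by (rule mu_in_unit_space_imp_eq_iv[OF _ assms(3)]) (simp add: rg_mu assms)
  then have "mu G k \<gamma> = mu G (rg G \<gamma>) \<gamma>" by simp
  then show ?thesis by (rule mu_cancel_right[rotated 2]) (simp_all add: assms)
qed

lemma mu_translate_product:
  assumes "sr G \<beta> = rg G h1" "sr G h1 = rg G \<delta>" "rg G \<delta> = rg G h2" "sr G h2 = rg G \<epsilon>"
  shows "mu G (mu G \<beta> (mu G h1 \<delta>)) (mu G (iv G \<delta>) (mu G h2 \<epsilon>)) = mu G \<beta> (mu G (mu G h1 h2) \<epsilon>)"
proof -
  have "mu G (mu G \<beta> (mu G h1 \<delta>)) (mu G (iv G \<delta>) (mu G h2 \<epsilon>))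
      = mu G \<beta> (mu G (mu G h1 \<delta>) (mu G (iv G \<delta>) (mu G h2 \<epsilon>)))"
    by (rule mu_assoc) (simp_all add: assms rg_mu sr_mu)
  also have "mu G (mu G h1 \<delta>) (mu G (iv G \<delta>) (mu G h2 \<epsilon>))
      = mu G h1 (mu G \<delta> (mu G (iv G \<delta>) (mu G h2 \<epsilon>)))"
    by (rule mu_assoc) (simp_all add: assms rg_mu)
  also have "mu G \<delta> (mu G (iv G \<delta>) (mu G h2 \<epsilon>)) = mu G h2 \<epsilon>"
    by (rule mu_iv_mu) (simp add: assms rg_mu)
  also have "mu G h1 (mu G h2 \<epsilon>) = mu G (mu G h1 h2) \<epsilon>"
    by (rule mu_assoc[symmetric]) (simp_all add: assms)
  finally show ?thesis .
qed

definition setmul :: "'g set \<Rightarrow> 'g set \<Rightarrow> 'g set" where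
  "setmul A B = (\<lambda>p. mu G (fst p) (snd p)) ` ({p. sr G (fst p) = rg G (snd p)} \<inter> A \<times> B)"

lemma setmulI: "a \<in> A \<Longrightarrow> b \<in> B \<Longrightarrow> sr G a = rg G b \<Longrightarrow> mu G a b \<in> setmul A B"
  unfolding setmul_def by (rule image_eqI[of _ _ "(a,b)"]) auto

lemma setmulE:
  assumes "x \<in> setmul A B"
  obtains a b where "a \<in> A" "b \<in> B" "sr G a = rg G b" "x = mu G a b"
  using assms unfolding setmul_def by auto

lemma setmul_mono: "A \<subseteq> A' \<Longrightarrow> B \<subseteq> B' \<Longrightarrow> setmul A B \<subseteq> setmul A' B'"
  unfolding setmul_def by blast

lemma iv_setmul: "iv G ` setmul A B = setmul (iv G ` B) (iv G ` A)"
proof (intro equalityI subsetI)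
  fix x assume "x \<in> iv G ` setmul A B"
  then obtain a b where "a \<in> A" "b \<in> B" "sr G a = rg G b" "x = iv G (mu G a b)"
    by (auto elim: setmulE)
  then show "x \<in> setmul (iv G ` B) (iv G ` A)"
    by (simp add: iv_mu_distrib setmulI)
next
  fix x assume "x \<in> setmul (iv G ` B) (iv G ` A)"
  then obtain a b where "a \<in> A" "b \<in> B" "sr G a = rg G b" "x = mu G (iv G b) (iv G a)"
    by (auto elim!: setmulE)
  then have "x = iv G (mu G a b)" "mu G a b \<in> setmul A B"
    by (simp_all add: iv_mu_distrib setmulI)
  then show "x \<in> iv G ` setmul A B" by blast
qed

lemma inj_on_rg_setmul:
  "inj_on (rg G) A \<Longrightarrow> inj_on (rg G) B \<Longrightarrow> inj_on (rg G) (setmul A B)"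
  by (rule inj_onI, elim setmulE) (metis inj_onD rg_mu)

lemma inj_on_sr_setmul:
  "inj_on (sr G) A \<Longrightarrow> inj_on (sr G) B \<Longrightarrow> inj_on (sr G) (setmul A B)"
  by (rule inj_onI, elim setmulE) (metis inj_onD sr_mu)

lemma setmul_iv_subset_unit_space:
  assumes "inj_on (sr G) A"
  shows "setmul A (iv G ` A) \<subseteq> G0"
  using assms by (auto elim!: setmulE simp: inj_on_eq_iff)

definition supp_lift :: "('g \<Rightarrow> 'b::zero) \<Rightarrow> 'g \<Rightarrow> 'g" where
  "supp_lift m x = (THE \<eta>. \<eta> \<in> fsupp m \<and> sr G \<eta> = x)"

lemma alpha_fsupp: "alpha G (fsupp m) x = rg G (supp_lift m x)"
  unfolding alpha_def supp_lift_def ..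

lemma supp_lift_eq:
  assumes "inj_on (sr G) (fsupp m)" "\<eta> \<in> fsupp m" "sr G \<eta> = x"
  shows "supp_lift m x = \<eta>"
  unfolding supp_lift_def
proof (rule the_equality)
  show "\<eta> \<in> fsupp m \<and> sr G \<eta> = x" using assms(2,3) by simp
  fix \<eta>' assume "\<eta>' \<in> fsupp m \<and> sr G \<eta>' = x"
  then show "\<eta>' = \<eta>" using assms inj_on_eq_iff by metis
qed

lemma supp_lift_in:
  assumes "inj_on (sr G) (fsupp m)" "x \<in> sr G ` fsupp m"
  shows "supp_lift m x \<in> fsupp m" "sr G (supp_lift m x) = x"
proof -
  obtain \<eta> where "\<eta> \<in> fsupp m" "sr G \<eta> = x" using assms(2) by blast
  moreover have "supp_lift m x = \<eta>" using supp_lift_eq[OF assms(1)] calculation .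
  ultimately show "supp_lift m x \<in> fsupp m" "sr G (supp_lift m x) = x" by simp_all
qed

end

locale ample_groupoid = groupoid_structure G for G :: "('g::t2_space) gpd" +
  assumes ample: "ample_hausdorff G"
begin

lemma local_homeo_rg: "local_homeo G (rg G)"
  and local_homeo_sr: "local_homeo G (sr G)"
  and continuous_iv: "continuous_on UNIV (iv G)"
  and continuous_mu: "continuous_on {p. sr G (fst p) = rg G (snd p)} (\<lambda>p. mu G (fst p) (snd p))"
  and ample_basis: "\<And>V x. openin (top_of_set G0) V \<Longrightarrow> x \<in> V \<Longrightarrow>
        \<exists>K. compact K \<and> openin (top_of_set G0) K \<and> x \<in> K \<and> K \<subseteq> V"
  using ample unfolding ample_hausdorff_def by blast+

lemma local_homeo_nbhd:
  assumes "local_homeo G f"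
  obtains U where "open U" "a \<in> U" "inj_on f U" "openin (top_of_set G0) (f ` U)"
    "homeomorphism U (f ` U) f (inv_into U f)"
proof -
  obtain U where U: "open U" "a \<in> U" "openin (top_of_set G0) (f ` U)"
    "homeomorphism U (f ` U) f (inv_into U f)"
    using assms unfolding local_homeo_def by blast
  moreover have "inj_on f U"
    using homeomorphism_apply1[OF U(4)] by (rule inj_on_inverseI)
  ultimately show ?thesis using that by blast
qed

lemma continuous_local_homeo:
  assumes "local_homeo G f"
  shows "continuous_on UNIV f"
proof -
  have "isCont f a" for a
  proof -
    obtain U where "open U" "a \<in> U" "homeomorphism U (f ` U) f (inv_into U f)"
      using local_homeo_nbhd[OF assms] by blast
    then show ?thesis
      using continuous_on_eq_continuous_at unfolding homeomorphism_def by blast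
  qed
  then show ?thesis by (simp add: continuous_at_imp_continuous_on)
qed

lemma continuous_rg: "continuous_on UNIV (rg G)"
  and continuous_sr: "continuous_on UNIV (sr G)"
  using continuous_local_homeo local_homeo_rg local_homeo_sr by auto

lemma open_vimage_continuous: "continuous_on UNIV f \<Longrightarrow> open B \<Longrightarrow> open (f -` B)"
  using continuous_on_open_vimage[of UNIV f] by simp

lemma local_homeo_openin_image:
  assumes "local_homeo G f" "open W"
  shows "openin (top_of_set G0) (f ` W)"
proof (subst openin_subopen, intro ballI)
  fix y assume "y \<in> f ` W"
  then obtain a where a: "a \<in> W" "y = f a" by blast
  obtain U where U: "open U" "a \<in> U" "openin (top_of_set G0) (f ` U)"
    "homeomorphism U (f ` U) f (inv_into U f)"
    using local_homeo_nbhd[OF assms(1)] by blast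
  have "openin (top_of_set U) (W \<inter> U)"
    using assms(2) by (metis openin_open_Int Int_commute)
  then have "openin (top_of_set (f ` U)) (f ` (W \<inter> U))"
    using homeomorphism_imp_open_map[OF U(4)] by blast
  then have "openin (top_of_set G0) (f ` (W \<inter> U))"
    using U(3) openin_trans by blast
  then show "\<exists>T. openin (top_of_set G0) T \<and> y \<in> T \<and> T \<subseteq> f ` W"
    using a U(2) by blast
qed

lemma open_unit_space: "open G0"
proof (subst open_subopen, intro ballI)
  fix u assume u: "u \<in> G0"
  obtain U where U: "open U" "u \<in> U" "inj_on (rg G) U"
    using local_homeo_nbhd[OF local_homeo_rg] by blast
  \<comment> \<open>a point of U whose range is again in U must be that range, hence a unit\<close>
  define W where "W = U \<inter> rg G -` U"
  have "open W"
    unfolding W_def using U(1) continuous_rg by (simp add: open_Int open_vimage_continuous)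
  moreover have "u \<in> W"
    using u U unfolding W_def by (simp add: rg_unit)
  moreover have "W \<subseteq> G0"
  proof
    fix x assume "x \<in> W"
    then have "rg G x = x"
      using inj_onD[OF U(3), of "rg G x" x] unfolding W_def by simp
    then show "x \<in> G0" by (simp add: unit_space_iff)
  qed
  ultimately show "\<exists>T. open T \<and> u \<in> T \<and> T \<subseteq> G0" by blast
qed

lemma openin_unit_space_imp_open: "openin (top_of_set G0) V \<Longrightarrow> open V"
  using open_unit_space openin_open_trans by blast

lemma open_rg_image: "open W \<Longrightarrow> open (rg G ` W)"
  using local_homeo_openin_image[OF local_homeo_rg] openin_unit_space_imp_open by blast

lemma open_iv_image: "open A \<Longrightarrow> open (iv G ` A)"
  using continuous_iv by (simp add: iv_image_eq_vimage continuous_on_open_vimage)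

lemma compact_iv_image: "compact A \<Longrightarrow> compact (iv G ` A)"
  using continuous_iv compact_continuous_image continuous_on_subset by blast

lemma finite_fibre_local_homeo:
  assumes "local_homeo G f" "compact K"
  shows "finite {a \<in> K. f a = y}"
proof -
  have "\<exists>U. open U \<and> a \<in> U \<and> inj_on f U" for a
    using local_homeo_nbhd[OF assms(1), of a] by blast
  then obtain U where U: "\<And>a. open (U a)" "\<And>a. a \<in> U a" "\<And>a. inj_on f (U a)"
    by metis
  have cover: "K \<subseteq> (\<Union>a\<in>K. U a)" using U(2) by blast
  obtain C where C: "C \<subseteq> K" "finite C" "K \<subseteq> (\<Union>a\<in>C. U a)"
    by (rule compactE_image[OF assms(2) _ cover]) (simp add: U(1))
  have "{a \<in> K. f a = y} \<subseteq> (\<Union>a\<in>C. f -` {y} \<inter> U a)" using C by blast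
  moreover have "finite (f -` {y} \<inter> U a)" for a
    by (rule finite_vimage_IntI) (simp_all add: U(3))
  ultimately show ?thesis using C(2) by (meson finite_UN_I finite_subset)
qed

lemma finite_sr_fibre: "compact K \<Longrightarrow> finite {a \<in> K. sr G a = y}"
  using finite_fibre_local_homeo local_homeo_sr by auto

lemma compact_open_bisection_basis:
  assumes "open W" "\<eta> \<in> W"
  obtains A where "compact A" "open A" "\<eta> \<in> A" "A \<subseteq> W" "inj_on (rg G) A" "inj_on (sr G) A"
proof -
  obtain U1 where U1: "open U1" "\<eta> \<in> U1" "inj_on (rg G) U1"
    using local_homeo_nbhd[OF local_homeo_rg] by blast
  obtain U2 where U2: "open U2" "\<eta> \<in> U2" "inj_on (sr G) U2"
    "homeomorphism U2 (sr G ` U2) (sr G) (inv_into U2 (sr G))"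
    using local_homeo_nbhd[OF local_homeo_sr] by blast
  define V where "V = U1 \<inter> U2 \<inter> W"
  have V: "open V" "\<eta> \<in> V" using U1 U2 assms unfolding V_def by auto
  obtain K where K: "compact K" "openin (top_of_set G0) K" "sr G \<eta> \<in> K" "K \<subseteq> sr G ` V"
    using ample_basis[OF local_homeo_openin_image[OF local_homeo_sr V(1)]] V(2) by blast
  define A where "A = V \<inter> sr G -` K"
  have A_eq: "A = inv_into U2 (sr G) ` K"
  proof
    show "A \<subseteq> inv_into U2 (sr G) ` K"
    proof
      fix x assume "x \<in> A"
      then have "x = inv_into U2 (sr G) (sr G x)" "sr G x \<in> K"
        using U2(3) unfolding A_def V_def by (simp_all add: inv_into_f_f)
      then show "x \<in> inv_into U2 (sr G) ` K" by (rule image_eqI)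
    qed
    show "inv_into U2 (sr G) ` K \<subseteq> A"
      using K(4) U2(3) unfolding A_def V_def by (auto simp: inv_into_f_f)
  qed
  have "open A"
    unfolding A_def using V(1) K(2) openin_unit_space_imp_open continuous_sr
    by (simp add: open_Int open_vimage_continuous)
  moreover have "compact A"
    unfolding A_eq
  proof (rule compact_continuous_image[OF _ K(1)])
    have "continuous_on (sr G ` U2) (inv_into U2 (sr G))"
      using U2(4) unfolding homeomorphism_def by blast
    moreover have "K \<subseteq> sr G ` U2" using K(4) unfolding V_def by auto
    ultimately show "continuous_on K (inv_into U2 (sr G))"
      using continuous_on_subset by blast
  qed
  moreover have "\<eta> \<in> A" "A \<subseteq> W" "inj_on (rg G) A" "inj_on (sr G) A"
    using V K U1(3) U2(3) unfolding A_def V_def by (auto intro: inj_on_subset)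
  ultimately show ?thesis using that by blast
qed

lemma compact_open_unit_cover:
  assumes "compact K" "K \<subseteq> G0"
  obtains V where "compact V" "open V" "V \<subseteq> G0" "K \<subseteq> V"
proof -
  have "\<forall>x\<in>K. \<exists>V. compact V \<and> open V \<and> V \<subseteq> G0 \<and> x \<in> V"
  proof
    fix x assume "x \<in> K"
    then have "x \<in> G0" using assms(2) by blast
    then obtain V where "compact V" "openin (top_of_set G0) V" "x \<in> V" "V \<subseteq> G0"
      using ample_basis[OF openin_subtopology_self] by blast
    then show "\<exists>V. compact V \<and> open V \<and> V \<subseteq> G0 \<and> x \<in> V"
      using openin_unit_space_imp_open by blast
  qed
  then obtain V where V: "\<forall>x\<in>K. compact (V x) \<and> open (V x) \<and> V x \<subseteq> G0 \<and> x \<in> V x"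
    by (rule bchoice[THEN exE])
  have cover: "K \<subseteq> (\<Union>x\<in>K. V x)" using V by blast
  obtain C where C: "C \<subseteq> K" "finite C" "K \<subseteq> (\<Union>x\<in>C. V x)"
    by (rule compactE_image[OF assms(1) _ cover]) (simp add: V)
  have "compact (\<Union>x\<in>C. V x)" using C V by (intro compact_UN) auto
  moreover have "open (\<Union>x\<in>C. V x)" "(\<Union>x\<in>C. V x) \<subseteq> G0" using C V by auto
  ultimately show ?thesis using that[of "\<Union>x\<in>C. V x"] C(3) by blast
qed

lemma compact_open_unit_nbhd_avoiding:
  assumes "x \<in> G0" "finite F" "x \<notin> F"
  obtains V where "compact V" "open V" "V \<subseteq> G0" "x \<in> V" "V \<inter> F = {}"
proof -
  have "openin (top_of_set G0) (G0 - F)"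
    using assms(2) finite_imp_closed by (metis Diff_eq open_Compl openin_open_Int)
  then obtain K where "compact K" "openin (top_of_set G0) K" "x \<in> K" "K \<subseteq> G0 - F"
    using ample_basis assms by blast
  then show ?thesis using that openin_unit_space_imp_open by blast
qed

lemma compact_setmul:
  assumes "compact A" "compact B"
  shows "compact (setmul A B)"
  unfolding setmul_def
proof (rule compact_continuous_image)
  have "closed {p. sr G (fst p) = rg G (snd p)}"
    by (intro closed_Collect_eq continuous_on_compose2[OF continuous_sr]
        continuous_on_compose2[OF continuous_rg] continuous_intros) auto
  then show "compact ({p. sr G (fst p) = rg G (snd p)} \<inter> A \<times> B)"
    using closed_Int_compact compact_Times assms by blast
  show "continuous_on ({p. sr G (fst p) = rg G (snd p)} \<inter> A \<times> B) (\<lambda>p. mu G (fst p) (snd p))"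
    by (rule continuous_on_subset[OF continuous_mu]) blast
qed

lemma cobisD:
  assumes "cobis G A"
  shows "compact A" "open A" "inj_on (rg G) A" "inj_on (sr G) A"
  using assms homeomorphism_apply1 unfolding cobis_def bisection_def
  by (blast intro: inj_on_inverseI)+

end

section \<open>The Steinberg algebra\<close>

definition locally_constant :: "('a::topological_space \<Rightarrow> 'b) \<Rightarrow> bool" where
  "locally_constant f \<longleftrightarrow> (\<forall>a. \<exists>U. open U \<and> a \<in> U \<and> (\<forall>b\<in>U. f b = f a))"

lemma fsupp_iff [simp]: "a \<in> fsupp f \<longleftrightarrow> f a \<noteq> 0"
  by (simp add: fsupp_def)

lemma fsupp_indicator [simp]: "fsupp (indicator A :: 'a \<Rightarrow> 'r::zero_neq_one) = A"
  by (auto simp: fsupp_def indicator_def)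

lemma open_fsupp_locally_constant:
  assumes "locally_constant f"
  shows "open (fsupp f)"
  unfolding open_subopen[of "fsupp f"]
  using assms unfolding locally_constant_def by (metis fsupp_iff subsetI)

lemma closed_fsupp_locally_constant:
  assumes "locally_constant f"
  shows "closed (fsupp f)"
  unfolding closed_def open_subopen[of "- fsupp f"]
  using assms unfolding locally_constant_def by (metis ComplD ComplI fsupp_iff subsetI)

lemma locally_constant_indicator:
  assumes "open A" "closed A"
  shows "locally_constant (indicator A)"
  unfolding locally_constant_def
proof
  fix a
  show "\<exists>U. open U \<and> a \<in> U \<and> (\<forall>b\<in>U. indicator A b = indicator A a)"
  proof (cases "a \<in> A")
    case True
    then show ?thesis using assms(1) by (intro exI[of _ A]) simp
  next
    case False
    then show ?thesis using assms(2) by (intro exI[of _ "- A"]) (simp add: closed_def)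
  qed
qed

lemma locally_constant_product_on_clopen:
  fixes f g :: "'a::topological_space \<Rightarrow> 'r::mult_zero"
  assumes f: "locally_constant f" and g: "locally_constant g" and Om: "open Om" "open (- Om)"
    and a: "continuous_on Om a" and b: "continuous_on Om b"
    and on: "\<And>\<eta>. \<eta> \<in> Om \<Longrightarrow> F \<eta> = f (a \<eta>) * g (b \<eta>)"
    and off: "\<And>\<eta>. \<eta> \<notin> Om \<Longrightarrow> F \<eta> = 0"
  shows "locally_constant F"
  unfolding locally_constant_def
proof
  fix \<eta>
  show "\<exists>U. open U \<and> \<eta> \<in> U \<and> (\<forall>\<zeta>\<in>U. F \<zeta> = F \<eta>)"
  proof (cases "\<eta> \<in> Om")
    case False
    then show ?thesis using Om(2) off by (intro exI[of _ "- Om"]) auto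
  next
    case True
    obtain V1 where V1: "open V1" "a \<eta> \<in> V1" "\<forall>\<zeta>\<in>V1. f \<zeta> = f (a \<eta>)"
      using f unfolding locally_constant_def by blast
    obtain V2 where V2: "open V2" "b \<eta> \<in> V2" "\<forall>\<zeta>\<in>V2. g \<zeta> = g (b \<eta>)"
      using g unfolding locally_constant_def by blast
    define U where "U = (a -` V1 \<inter> Om) \<inter> (b -` V2 \<inter> Om)"
    have "open (a -` V1 \<inter> Om)" "open (b -` V2 \<inter> Om)"
      using continuous_on_open_vimage[OF Om(1)] a b V1(1) V2(1) by auto
    then have "open U" unfolding U_def by auto
    moreover have "\<eta> \<in> U" using True V1 V2 unfolding U_def by auto
    moreover have "\<forall>\<zeta>\<in>U. F \<zeta> = F \<eta>"
      using V1(3) V2(3) on True unfolding U_def by auto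
    ultimately show ?thesis by blast
  qed
qed

lemma homeomorphism_inv_into:
  fixes f :: "'a::topological_space \<Rightarrow> 'b::t2_space"
  assumes "compact A" "continuous_on A f" "inj_on f A"
  shows "homeomorphism A (f ` A) f (inv_into A f)"
proof -
  obtain g where g: "homeomorphism A (f ` A) f g"
    using homeomorphism_compact[OF assms(1,2) refl assms(3)] by blast
  show ?thesis
    by (rule homeomorphism_cong[OF g refl refl refl])
      (use g assms(3) in \<open>auto simp: homeomorphism_apply1 inv_into_f_f\<close>)
qed

context ample_groupoid
begin

lemma steinberg_iff: "f \<in> steinberg G \<longleftrightarrow> locally_constant f \<and> compact (fsupp f)"
  unfolding steinberg_def locally_constant_def by simp

lemma steinbergD:
  assumes "f \<in> steinberg G"
  shows "locally_constant f" "compact (fsupp f)" "open (fsupp f)" "closed (fsupp f)"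
  using assms unfolding steinberg_iff
  by (auto intro: open_fsupp_locally_constant closed_fsupp_locally_constant)

lemma indicator_steinberg:
  assumes "compact A" "open A"
  shows "(indicator A :: 'g \<Rightarrow> 'r::comm_ring_1) \<in> steinberg G"
  using assms by (simp add: steinberg_iff compact_imp_closed locally_constant_indicator)

lemma diag_fsupp: "d \<in> diag G \<Longrightarrow> fsupp d \<subseteq> G0"
  unfolding diag_def by simp

lemma indicator_diag:
  assumes "compact V" "open V" "V \<subseteq> G0"
  shows "(indicator V :: 'g \<Rightarrow> 'r::comm_ring_1) \<in> diag G"
  unfolding diag_def using indicator_steinberg[OF assms(1,2)] assms(3) by simp

lemma conv_eq_single_term:
  fixes f g :: "'g \<Rightarrow> 'r::comm_ring_1"
  assumes "sr G a = rg G b" "mu G a b = \<eta>"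
    and unique: "\<And>a' b'. sr G a' = rg G b' \<Longrightarrow> mu G a' b' = \<eta> \<Longrightarrow> f a' \<noteq> 0 \<Longrightarrow> g b' \<noteq> 0
                   \<Longrightarrow> a' = a \<and> b' = b"
  shows "conv G f g \<eta> = f a * g b"
proof -
  let ?S = "{(a',b'). sr G a' = rg G b' \<and> mu G a' b' = \<eta> \<and> f a' \<noteq> 0 \<and> g b' \<noteq> 0}"
  have sub: "?S \<subseteq> {(a,b)}" using unique by blast
  show ?thesis
  proof (cases "f a \<noteq> 0 \<and> g b \<noteq> 0")
    case True
    then have "?S = {(a,b)}" using sub assms(1,2) by blast
    then show ?thesis unfolding conv_def by simp
  next
    case False
    then have "?S = {}" using sub by blast
    then have "conv G f g \<eta> = 0" unfolding conv_def by (simp only: sum.empty)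
    then show ?thesis using False by auto
  qed
qed

lemma conv_at:
  fixes f g :: "'g \<Rightarrow> 'r::comm_ring_1"
  assumes "rg G a = rg G \<eta>" and "\<forall>a'\<in>fsupp f. rg G a' = rg G \<eta> \<longrightarrow> a' = a"
  shows "conv G f g \<eta> = f a * g (mu G (iv G a) \<eta>)"
  using assms by (intro conv_eq_single_term) (auto simp: rg_mu mu_iv_mu iv_mu_mu)

lemma conv_at_mu:
  fixes f g :: "'g \<Rightarrow> 'r::comm_ring_1"
  assumes "inj_on (rg G) (fsupp f)" "f a \<noteq> 0" "sr G a = rg G b"
  shows "conv G f g (mu G a b) = f a * g b"
  using conv_at[of a "mu G a b" f g] assms by (simp add: rg_mu iv_mu_mu inj_on_eq_iff)

lemma conv_diag_right:
  fixes f d :: "'g \<Rightarrow> 'r::comm_ring_1"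
  assumes "fsupp d \<subseteq> G0"
  shows "conv G f d \<eta> = f \<eta> * d (sr G \<eta>)"
  using assms by (intro conv_eq_single_term) (auto simp: rg_unit)

lemma conv_diag_left:
  fixes f d :: "'g \<Rightarrow> 'r::comm_ring_1"
  assumes "fsupp d \<subseteq> G0"
  shows "conv G d f \<eta> = d (rg G \<eta>) * f \<eta>"
  using assms by (intro conv_eq_single_term) (auto simp: rg_unit sr_unit)

lemma fsupp_conv: "fsupp (conv G f g) \<subseteq> setmul (fsupp f) (fsupp g)"
proof
  fix \<eta> assume "\<eta> \<in> fsupp (conv G f g)"
  then have "(\<Sum>p\<in>{(a,b). sr G a = rg G b \<and> mu G a b = \<eta> \<and> f a \<noteq> 0 \<and> g b \<noteq> 0}.
      f (fst p) * g (snd p)) \<noteq> 0"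
    unfolding conv_def by simp
  then obtain p where "p \<in> {(a,b). sr G a = rg G b \<and> mu G a b = \<eta> \<and> f a \<noteq> 0 \<and> g b \<noteq> 0}"
    by (rule sum.not_neutral_contains_not_neutral)
  then show "\<eta> \<in> setmul (fsupp f) (fsupp g)"
    by (auto intro: setmulI)
qed

lemma fsupp_conv_eq:
  fixes f g :: "'g \<Rightarrow> 'r::idom"
  assumes "inj_on (rg G) (fsupp f)"
  shows "fsupp (conv G f g) = setmul (fsupp f) (fsupp g)"
  using fsupp_conv conv_at_mu[OF assms] by (fastforce elim: setmulE)

lemma fsupp_conv_diag:
  fixes d f :: "'g \<Rightarrow> 'r::comm_ring_1"
  assumes "fsupp d \<subseteq> G0"
  shows "fsupp (conv G f d) \<subseteq> fsupp f"
  using conv_diag_right[OF assms] by auto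

lemma continuous_on_mu_iv:
  assumes a: "continuous_on S a" and "\<And>\<eta>. \<eta> \<in> S \<Longrightarrow> rg G (a \<eta>) = rg G \<eta>"
  shows "continuous_on S (\<lambda>\<eta>. mu G (iv G (a \<eta>)) \<eta>)"
proof -
  have "continuous_on S (\<lambda>\<eta>. (iv G (a \<eta>), \<eta>))"
    by (rule continuous_on_Pair[OF continuous_on_compose2[OF continuous_iv a] continuous_on_id]) simp
  moreover have "(\<lambda>\<eta>. (iv G (a \<eta>), \<eta>)) ` S \<subseteq> {p. sr G (fst p) = rg G (snd p)}"
    using assms(2) by auto
  ultimately have "continuous_on S (\<lambda>x. (\<lambda>p. mu G (fst p) (snd p)) ((\<lambda>\<eta>. (iv G (a \<eta>), \<eta>)) x))"
    by (rule continuous_on_compose2[OF continuous_mu])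
  then show ?thesis by simp
qed

lemma open_rg_saturation:
  assumes "compact B" "open B"
  shows "open (rg G -` rg G ` B)" "open (- (rg G -` rg G ` B))"
proof -
  show "open (rg G -` rg G ` B)"
    using open_vimage_continuous[OF continuous_rg open_rg_image[OF assms(2)]] .
  have "closed (rg G ` B)"
    using compact_imp_closed[OF compact_continuous_image[OF
          continuous_on_subset[OF continuous_rg subset_UNIV] assms(1)]] .
  then have "open (rg G -` (- rg G ` B))"
    using open_vimage_continuous[OF continuous_rg] by (simp add: open_Compl)
  then show "open (- (rg G -` rg G ` B))" by (simp add: vimage_Compl)
qed

lemma locally_constant_conv:
  fixes f g :: "'g \<Rightarrow> 'r::comm_ring_1"
  assumes f: "f \<in> steinberg G" and g: "g \<in> steinberg G" and inj: "inj_on (rg G) (fsupp f)"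
  shows "locally_constant (conv G f g)"
proof -
  define B where "B = fsupp f"
  have B: "compact B" "open B" "inj_on (rg G) B" using steinbergD[OF f] inj unfolding B_def by auto
  define h where "h = inv_into B (rg G)"
  have hcont: "continuous_on (rg G ` B) h"
    using homeomorphism_inv_into[OF B(1) continuous_on_subset[OF continuous_rg subset_UNIV] B(3)]
    unfolding h_def homeomorphism_def by blast
  define Om where "Om = rg G -` (rg G ` B)"
  have Om: "open Om" "open (- Om)" unfolding Om_def using open_rg_saturation[OF B(1,2)] by auto
  \<comment> \<open>on Om the convolution is f (a \<eta>) * g (a(\<eta>)\<inverse> \<eta>) for the continuous section a of rg over B\<close>
  define a where "a = (\<lambda>\<eta>. h (rg G \<eta>))"
  have a: "a \<eta> \<in> B" "rg G (a \<eta>) = rg G \<eta>" if "\<eta> \<in> Om" for \<eta>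
    using that unfolding a_def Om_def h_def by (auto intro: inv_into_into f_inv_into_f)
  have val: "conv G f g \<eta> = f (a \<eta>) * g (mu G (iv G (a \<eta>)) \<eta>)" if "\<eta> \<in> Om" for \<eta>
  proof (rule conv_at)
    show "rg G (a \<eta>) = rg G \<eta>" using a(2)[OF that] .
    show "\<forall>a'\<in>fsupp f. rg G a' = rg G \<eta> \<longrightarrow> a' = a \<eta>"
      using a[OF that] inj unfolding B_def inj_on_def by auto
  qed
  have val0: "conv G f g \<eta> = 0" if "\<eta> \<notin> Om" for \<eta>
  proof (rule ccontr)
    assume "conv G f g \<eta> \<noteq> 0"
    then have "\<eta> \<in> setmul B (fsupp g)" using fsupp_conv[of f g] unfolding B_def by auto
    then obtain b c where "b \<in> B" "sr G b = rg G c" "\<eta> = mu G b c" by (rule setmulE)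
    then show False using that unfolding Om_def by (auto simp: rg_mu)
  qed
  have acont: "continuous_on Om a"
    unfolding a_def
    by (rule continuous_on_compose2[OF hcont continuous_on_subset[OF continuous_rg]]) (auto simp: Om_def)
  have bcont: "continuous_on Om (\<lambda>\<eta>. mu G (iv G (a \<eta>)) \<eta>)"
    using acont a(2) by (rule continuous_on_mu_iv)
  show ?thesis
    using steinbergD(1)[OF f] steinbergD(1)[OF g] Om acont bcont val val0
    by (rule locally_constant_product_on_clopen)
qed

lemma steinberg_conv:
  fixes f g :: "'g \<Rightarrow> 'r::comm_ring_1"
  assumes "f \<in> steinberg G" "g \<in> steinberg G" "inj_on (rg G) (fsupp f)"
  shows "conv G f g \<in> steinberg G"
proof -
  have lc: "locally_constant (conv G f g)" using locally_constant_conv[OF assms] .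
  have "compact (setmul (fsupp f) (fsupp g) \<inter> fsupp (conv G f g))"
    using compact_setmul steinbergD(2) assms closed_fsupp_locally_constant[OF lc]
    by (blast intro: compact_Int_closed)
  moreover have "setmul (fsupp f) (fsupp g) \<inter> fsupp (conv G f g) = fsupp (conv G f g)"
    using fsupp_conv by blast
  ultimately show ?thesis
    using lc by (simp add: steinberg_iff)
qed

lemma normaliser_swap: "normaliser G m n \<longleftrightarrow> normaliser G n m"
  unfolding normaliser_def by blast

lemma normaliser_steinberg:
  "normaliser G m n \<Longrightarrow> m \<in> steinberg G" "normaliser G m n \<Longrightarrow> n \<in> steinberg G"
  unfolding normaliser_def by auto

lemma conv_normaliser_in_diag:
  fixes m n :: "'g \<Rightarrow> 'r::comm_ring_1"
  assumes mn: "normaliser G m n"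
  shows "conv G m n \<in> diag G"
proof -
  have "compact (sr G ` fsupp m)"
    using compact_continuous_image[OF continuous_on_subset[OF continuous_sr subset_UNIV]
        steinbergD(2)[OF normaliser_steinberg(1)[OF mn]]] .
  moreover have "sr G ` fsupp m \<subseteq> G0" by auto
  ultimately obtain V where V: "compact V" "open V" "V \<subseteq> G0" "sr G ` fsupp m \<subseteq> V"
    by (rule compact_open_unit_cover)
  define d :: "'g \<Rightarrow> 'r" where "d = indicator V"
  have d: "d \<in> diag G" unfolding d_def using indicator_diag V(1-3) by blast
  have "conv G m d = m"
  proof
    fix \<eta>
    show "conv G m d \<eta> = m \<eta>"
    proof (cases "m \<eta> = 0")
      case False
      then have "sr G \<eta> \<in> V" using V(4) by auto
      then show ?thesis using conv_diag_right[OF diag_fsupp[OF d]] unfolding d_def by simp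
    qed (simp add: conv_diag_right[OF diag_fsupp[OF d]])
  qed
  moreover have "conv G (conv G m d) n \<in> diag G" using mn d unfolding normaliser_def by blast
  ultimately show ?thesis by simp
qed

lemma conv_normaliser_at_rg:
  fixes m n :: "'g \<Rightarrow> 'r::idom"
  assumes mn: "normaliser G m n" and "m \<gamma> \<noteq> 0"
  shows "conv G m n (rg G \<gamma>) = 1"
proof -
  have "conv G (conv G m n) m \<gamma> = m \<gamma>" using mn unfolding normaliser_def by simp
  then have "conv G m n (rg G \<gamma>) * m \<gamma> = 1 * m \<gamma>"
    using conv_diag_left[OF diag_fsupp[OF conv_normaliser_in_diag[OF mn]]] by simp
  then show ?thesis using assms(2) by simp
qed

section \<open>Normalisers supported on bisections\<close>

definition bisection_normaliser :: "('g \<Rightarrow> 'r::comm_ring_1) \<Rightarrow> ('g \<Rightarrow> 'r) \<Rightarrow> bool" where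
  "bisection_normaliser m n \<longleftrightarrow> m \<in> steinberg G \<and> n \<in> steinberg G
     \<and> inj_on (rg G) (fsupp m) \<and> inj_on (sr G) (fsupp m) \<and> fsupp n = iv G ` fsupp m
     \<and> (\<forall>a\<in>fsupp m. m a * n (iv G a) = 1)"

lemma bisection_normaliser_swap:
  assumes "bisection_normaliser m n"
  shows "bisection_normaliser n m"
proof -
  have "fsupp m = iv G ` fsupp n"
    using assms unfolding bisection_normaliser_def by (simp add: image_image)
  then show ?thesis
    using assms unfolding bisection_normaliser_def
    by (auto simp: inj_on_rg_iv_image inj_on_sr_iv_image mult.commute)
qed

lemma conv_in_diag:
  fixes f h :: "'g \<Rightarrow> 'r::comm_ring_1"
  assumes "f \<in> steinberg G" "h \<in> steinberg G" "inj_on (rg G) (fsupp f)"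
    and "setmul (fsupp f) (fsupp h) \<subseteq> G0"
  shows "conv G f h \<in> diag G"
proof -
  have "fsupp (conv G f h) \<subseteq> G0" using fsupp_conv[of f h] assms(4) by (rule order_trans)
  then show ?thesis using steinberg_conv[OF assms(1-3)] unfolding diag_def by simp
qed

lemma bisection_normaliser_sandwich:
  fixes m n d :: "'g \<Rightarrow> 'r::comm_ring_1"
  assumes mn: "bisection_normaliser m n" and d: "d \<in> diag G"
  shows "conv G (conv G m d) n \<in> diag G"
proof (rule conv_in_diag)
  have m: "m \<in> steinberg G" "inj_on (rg G) (fsupp m)" "inj_on (sr G) (fsupp m)"
    and n: "n \<in> steinberg G" "fsupp n = iv G ` fsupp m"
    using mn unfolding bisection_normaliser_def by auto
  have d': "d \<in> steinberg G" "fsupp d \<subseteq> G0" using d unfolding diag_def by auto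
  have md: "fsupp (conv G m d) \<subseteq> fsupp m" using fsupp_conv_diag[OF d'(2)] .
  show "conv G m d \<in> steinberg G" using steinberg_conv[OF m(1) d'(1) m(2)] .
  show "n \<in> steinberg G" by fact
  show "inj_on (rg G) (fsupp (conv G m d))" using m(2) md by (rule inj_on_subset)
  have "setmul (fsupp (conv G m d)) (fsupp n) \<subseteq> setmul (fsupp m) (iv G ` fsupp m)"
    using setmul_mono[OF md order_refl] n(2) by simp
  then show "setmul (fsupp (conv G m d)) (fsupp n) \<subseteq> G0"
    using setmul_iv_subset_unit_space[OF m(3)] by (rule order_trans)
qed

lemma bisection_normaliser_triple:
  fixes m n :: "'g \<Rightarrow> 'r::comm_ring_1"
  assumes mn: "bisection_normaliser m n"
  shows "conv G (conv G m n) m = m"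
proof
  fix \<zeta>
  have m: "inj_on (rg G) (fsupp m)" "inj_on (sr G) (fsupp m)" "fsupp n = iv G ` fsupp m"
    and one: "\<And>a. m a \<noteq> 0 \<Longrightarrow> m a * n (iv G a) = 1"
    using mn unfolding bisection_normaliser_def by auto
  have "fsupp (conv G m n) \<subseteq> G0"
    using order_trans[OF fsupp_conv[of m n]] setmul_iv_subset_unit_space[OF m(2)] m(3) by simp
  then have "conv G (conv G m n) m \<zeta> = conv G m n (rg G \<zeta>) * m \<zeta>"
    by (rule conv_diag_left)
  moreover have "conv G m n (rg G \<zeta>) = 1" if "m \<zeta> \<noteq> 0"
    using conv_at_mu[OF m(1) that, of "iv G \<zeta>" n] one[OF that] by simp
  ultimately show "conv G (conv G m n) m \<zeta> = m \<zeta>" by (cases "m \<zeta> = 0") auto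
qed

lemma bisection_normaliser_imp_normaliser:
  assumes "bisection_normaliser m n"
  shows "normaliser G m n"
proof -
  have nm: "bisection_normaliser n m" using bisection_normaliser_swap[OF assms] .
  have "m \<in> steinberg G" "n \<in> steinberg G"
    using assms unfolding bisection_normaliser_def by auto
  moreover have "\<forall>d\<in>diag G. conv G (conv G m d) n \<in> diag G \<and> conv G (conv G n d) m \<in> diag G"
    using bisection_normaliser_sandwich[OF assms] bisection_normaliser_sandwich[OF nm] by blast
  moreover have "conv G (conv G m n) m = m" "conv G (conv G n m) n = n"
    using bisection_normaliser_triple[OF assms] bisection_normaliser_triple[OF nm] .
  ultimately show ?thesis unfolding normaliser_def by blast
qed

lemma bisection_normaliser_indicator:
  assumes "compact A" "open A" "inj_on (rg G) A" "inj_on (sr G) A"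
  shows "bisection_normaliser (indicator A :: 'g \<Rightarrow> 'r::comm_ring_1) (indicator (iv G ` A))"
  using assms indicator_steinberg compact_iv_image open_iv_image
  unfolding bisection_normaliser_def by auto

lemma bisection_normaliser_conv:
  fixes m1 n1 m2 n2 :: "'g \<Rightarrow> 'r::idom"
  assumes mn1: "bisection_normaliser m1 n1" and mn2: "bisection_normaliser m2 n2"
  shows "bisection_normaliser (conv G m1 m2) (conv G n2 n1)"
proof -
  have m1: "m1 \<in> steinberg G" "inj_on (rg G) (fsupp m1)" "inj_on (sr G) (fsupp m1)"
      "fsupp n1 = iv G ` fsupp m1" "\<And>a. m1 a \<noteq> 0 \<Longrightarrow> m1 a * n1 (iv G a) = 1"
    and m2: "m2 \<in> steinberg G" "inj_on (rg G) (fsupp m2)" "inj_on (sr G) (fsupp m2)"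
      "fsupp n2 = iv G ` fsupp m2" "\<And>a. m2 a \<noteq> 0 \<Longrightarrow> m2 a * n2 (iv G a) = 1"
    using mn1 mn2 unfolding bisection_normaliser_def by auto
  have n1: "n1 \<in> steinberg G" and n2: "n2 \<in> steinberg G" "inj_on (rg G) (fsupp n2)"
    using bisection_normaliser_swap[OF mn1] bisection_normaliser_swap[OF mn2]
    unfolding bisection_normaliser_def by auto
  have supp_m: "fsupp (conv G m1 m2) = setmul (fsupp m1) (fsupp m2)"
    using fsupp_conv_eq[OF m1(2)] .
  have "fsupp (conv G n2 n1) = setmul (iv G ` fsupp m2) (iv G ` fsupp m1)"
    using fsupp_conv_eq[OF n2(2)] m1(4) m2(4) by simp
  then have supp_n: "fsupp (conv G n2 n1) = iv G ` fsupp (conv G m1 m2)"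
    by (simp add: supp_m iv_setmul)
  have "conv G m1 m2 \<zeta> * conv G n2 n1 (iv G \<zeta>) = 1" if "\<zeta> \<in> fsupp (conv G m1 m2)" for \<zeta>
  proof -
    have "\<zeta> \<in> setmul (fsupp m1) (fsupp m2)" using that supp_m by simp
    then obtain a1 a2 where a: "a1 \<in> fsupp m1" "a2 \<in> fsupp m2" "sr G a1 = rg G a2" "\<zeta> = mu G a1 a2"
      by (rule setmulE)
    then have a: "m1 a1 \<noteq> 0" "m2 a2 \<noteq> 0" "sr G a1 = rg G a2" "\<zeta> = mu G a1 a2" by simp_all
    have "n2 (iv G a2) \<noteq> 0" using m2(5)[OF a(2)] by auto
    then have "conv G n2 n1 (iv G \<zeta>) = n2 (iv G a2) * n1 (iv G a1)"
      using conv_at_mu[OF n2(2)] a(3,4) by (simp add: iv_mu_distrib)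
    moreover have "conv G m1 m2 \<zeta> = m1 a1 * m2 a2"
      using conv_at_mu[OF m1(2) a(1,3)] a(4) by simp
    ultimately show ?thesis
      using m1(5)[OF a(1)] m2(5)[OF a(2)] by (simp add: algebra_simps)
  qed
  then show ?thesis
    unfolding bisection_normaliser_def
    using steinberg_conv[OF m1(1) m2(1) m1(2)] steinberg_conv[OF n2(1) n1 n2(2)] supp_m supp_n
      inj_on_rg_setmul[OF m1(2) m2(2)] inj_on_sr_setmul[OF m1(3) m2(3)]
    by simp
qed

lemma cutoff_conv_in_diag_imp_eq:
  fixes m1 n1 m2 n2 :: "'g \<Rightarrow> 'r::idom"
  assumes mn1: "bisection_normaliser m1 n1" and mn2: "bisection_normaliser m2 n2"
    and \<eta>: "m1 \<eta>1 \<noteq> 0" "m2 \<eta>2 \<noteq> 0" "sr G \<eta>1 = x" "sr G \<eta>2 = x"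
    and U: "U \<subseteq> G0" "x \<in> U" "conv G (conv G m1 (indicator U)) n2 \<in> diag G"
  shows "\<eta>1 = \<eta>2"
proof -
  define f where "f = conv G m1 (indicator U :: 'g \<Rightarrow> 'r)"
  have U': "fsupp (indicator U :: 'g \<Rightarrow> 'r) \<subseteq> G0" using U(1) by simp
  have "inj_on (rg G) (fsupp m1)" using mn1 unfolding bisection_normaliser_def by blast
  then have "inj_on (rg G) (fsupp f)"
    unfolding f_def using fsupp_conv_diag[OF U'] by (rule inj_on_subset)
  moreover have "f \<eta>1 \<noteq> 0" unfolding f_def using conv_diag_right[OF U'] \<eta>(1,3) U(2) by simp
  moreover have "n2 (iv G \<eta>2) \<noteq> 0"
    using mn2 \<eta>(2) unfolding bisection_normaliser_def by auto
  ultimately have "conv G f n2 (mu G \<eta>1 (iv G \<eta>2)) = f \<eta>1 * n2 (iv G \<eta>2)"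
    using \<eta>(3,4) by (intro conv_at_mu) simp_all
  then have "conv G f n2 (mu G \<eta>1 (iv G \<eta>2)) \<noteq> 0"
    using \<open>f \<eta>1 \<noteq> 0\<close> \<open>n2 (iv G \<eta>2) \<noteq> 0\<close> by simp
  then have "mu G \<eta>1 (iv G \<eta>2) \<in> G0"
    using diag_fsupp[OF U(3)] unfolding f_def by auto
  then have "iv G \<eta>2 = iv G \<eta>1"
    using \<eta>(3,4) by (intro mu_in_unit_space_imp_eq_iv) simp_all
  then show ?thesis by (rule iv_inj[symmetric])
qed

lemma cutoff_conv_in_diag:
  fixes m1 n1 m2 n2 :: "'g \<Rightarrow> 'r::comm_ring_1"
  assumes mn1: "bisection_normaliser m1 n1" and mn2: "bisection_normaliser m2 n2"
    and \<eta>: "m1 \<eta> \<noteq> 0" "m2 \<eta> \<noteq> 0"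
  obtains U where "compact U" "open U" "U \<subseteq> G0" "sr G \<eta> \<in> U"
    "conv G (conv G m1 (indicator U)) n2 \<in> diag G"
proof -
  have m1: "m1 \<in> steinberg G" "inj_on (rg G) (fsupp m1)" "inj_on (sr G) (fsupp m1)"
    and m2: "m2 \<in> steinberg G" "inj_on (sr G) (fsupp m2)"
    and n2: "n2 \<in> steinberg G" "fsupp n2 = iv G ` fsupp m2"
    using mn1 mn2 unfolding bisection_normaliser_def by auto
  \<comment> \<open>cut m1 down to the arrows over which it shares its support with m2\<close>
  define Ov where "Ov = fsupp m1 \<inter> fsupp m2"
  have "open Ov" unfolding Ov_def using steinbergD(3) m1(1) m2(1) by blast
  moreover have "sr G \<eta> \<in> sr G ` Ov" unfolding Ov_def using \<eta> by auto
  ultimately obtain U where U: "compact U" "openin (top_of_set G0) U" "sr G \<eta> \<in> U" "U \<subseteq> sr G ` Ov"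
    using ample_basis[OF local_homeo_openin_image[OF local_homeo_sr]] by blast
  have U0: "open U" "U \<subseteq> G0" using U(2,4) openin_unit_space_imp_open by auto
  define f where "f = conv G m1 (indicator U :: 'g \<Rightarrow> 'r)"
  have U': "fsupp (indicator U :: 'g \<Rightarrow> 'r) \<subseteq> G0" using U0(2) by simp
  have f: "f \<in> steinberg G" "inj_on (rg G) (fsupp f)"
    unfolding f_def using steinberg_conv[OF m1(1) indicator_steinberg[OF U(1) U0(1)] m1(2)]
      inj_on_subset[OF m1(2) fsupp_conv_diag[OF U']] by auto
  have "setmul (fsupp f) (fsupp n2) \<subseteq> G0"
  proof
    fix y assume "y \<in> setmul (fsupp f) (fsupp n2)"
    then obtain a a2 where a: "a \<in> fsupp f" "a2 \<in> fsupp m2" "sr G a = sr G a2" "y = mu G a (iv G a2)"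
      using n2(2) by (auto elim!: setmulE)
    have "m1 a * indicator U (sr G a) \<noteq> 0"
      using a(1) conv_diag_right[OF U'] unfolding f_def by simp
    then have "m1 a \<noteq> 0" "sr G a \<in> U" by (cases "sr G a \<in> U"; simp)+
    then obtain a' where a': "a' \<in> Ov" "sr G a = sr G a'" using U(4) by blast
    then have "a' = a"
      using \<open>m1 a \<noteq> 0\<close> inj_on_eq_iff[OF m1(3)] unfolding Ov_def by auto
    then have "a \<in> fsupp m2" using a'(1) unfolding Ov_def by simp
    then have "a2 = a" using inj_on_eq_iff[OF m2(2)] a(2,3) by auto
    then show "y \<in> G0" using a(4) by simp
  qed
  then have "conv G f n2 \<in> diag G" by (rule conv_in_diag[OF f(1) n2(1) f(2)])
  then show ?thesis using that U(1,3) U0 unfolding f_def by blast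
qed

end

section \<open>Graded groupoids and isotropy\<close>

locale graded_ample_groupoid = ample_groupoid G for G :: "('g::t2_space) gpd" +
  fixes c :: "'g \<Rightarrow> 'a::group_add"
  assumes cocycle: "cont_cocycle G c"
begin

lemma c_mu: "sr G a = rg G b \<Longrightarrow> c (mu G a b) = c a + c b"
  using cocycle unfolding cont_cocycle_def by blast

lemma open_c_fibre: "open (c -` {g})"
  using cocycle unfolding cont_cocycle_def by blast

lemma c_unit:
  assumes "u \<in> G0"
  shows "c u = 0"
proof -
  have "c u + c u = c u + 0"
    using c_mu[of u u] mu_sr[of u] assms by (simp add: rg_unit sr_unit)
  then show ?thesis by (rule add_left_imp_eq)
qed

lemma c_iv: "c (iv G a) = - c a"
  using c_mu[of a "iv G a"] c_unit[of "rg G a"] by (simp add: add_eq_0_iff)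

lemma homog_iff: "f \<in> homog G c g \<longleftrightarrow> f \<in> steinberg G \<and> (\<forall>a. f a \<noteq> 0 \<longrightarrow> c a = g)"
  unfolding homog_def by auto

lemma normalisers_swap: "(m, n) \<in> normalisers G c g \<Longrightarrow> (n, m) \<in> normalisers G c (- g)"
  unfolding normalisers_def using normaliser_swap by auto

lemma homog_conv:
  fixes f h :: "'g \<Rightarrow> 'r::comm_ring_1"
  assumes f: "f \<in> homog G c g1" and h: "h \<in> homog G c g2" and inj: "inj_on (rg G) (fsupp f)"
  shows "conv G f h \<in> homog G c (g1 + g2)"
proof -
  have "c y = g1 + g2" if "y \<in> setmul (fsupp f) (fsupp h)" for y
    using that f h by (auto elim!: setmulE simp: homog_iff c_mu)
  then show ?thesis
    using f h fsupp_conv[of f h] steinberg_conv[OF _ _ inj] by (auto simp: homog_iff)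
qed

definition ker_isotropy :: "'g \<Rightarrow> 'g set" where
  "ker_isotropy z = c -` {0} \<inter> {\<eta>. sr G \<eta> = z \<and> rg G \<eta> = z}"

lemma ker_isotropy_iff: "h \<in> ker_isotropy z \<longleftrightarrow> c h = 0 \<and> sr G h = z \<and> rg G h = z"
  unfolding ker_isotropy_def by auto

lemma unit_in_ker_isotropy: "z \<in> G0 \<Longrightarrow> z \<in> ker_isotropy z"
  by (simp add: ker_isotropy_iff c_unit rg_unit sr_unit)

lemma ker_isotropy_unit_iff: "h \<in> ker_isotropy z \<Longrightarrow> h \<in> G0 \<longleftrightarrow> h = z"
  by (auto simp: ker_isotropy_iff unit_space_iff)

lemma grp_conv_outside_ker_isotropy:
  assumes "k \<notin> ker_isotropy z"
  shows "grp_conv G (ker_isotropy z) f g k = 0"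
proof -
  have "{(a,b). a \<in> ker_isotropy z \<and> b \<in> ker_isotropy z \<and> mu G a b = k \<and> f a \<noteq> 0 \<and> g b \<noteq> 0} = {}"
    using assms by (auto simp: ker_isotropy_iff c_mu rg_mu sr_mu)
  then show ?thesis unfolding grp_conv_def by (simp only: sum.empty)
qed

lemma ker_isotropy_mu_swap:
  assumes "z \<in> G0" "a \<in> ker_isotropy z" "b \<in> ker_isotropy z" "mu G a b = z"
  shows "mu G b a = z"
proof -
  have "b = iv G a"
    using assms by (intro mu_in_unit_space_imp_eq_iv) (auto simp: ker_isotropy_iff)
  then show ?thesis using assms(2) by (simp add: ker_isotropy_iff)
qed

lemma grp_conv_comm_at_unit:
  fixes f g :: "'g \<Rightarrow> 'r::comm_ring_1"
  assumes z: "z \<in> G0"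
  shows "grp_conv G (ker_isotropy z) f g z = grp_conv G (ker_isotropy z) g f z"
  unfolding grp_conv_def
  by (rule sum.reindex_bij_witness[of _ prod.swap prod.swap])
    (use ker_isotropy_mu_swap[OF z] in \<open>auto simp: mult.commute\<close>)

definition isotropy_slice :: "('g \<Rightarrow> 'r::zero) \<Rightarrow> 'g \<Rightarrow> 'g \<Rightarrow> 'g \<Rightarrow> 'g \<Rightarrow> 'r" where
  "isotropy_slice f \<beta> \<delta> z h = (if h \<in> ker_isotropy z then f (mu G \<beta> (mu G h \<delta>)) else 0)"

lemma inj_on_isotropy_translate:
  assumes \<beta>: "sr G \<beta> = z" and \<delta>: "rg G \<delta> = z"
  shows "inj_on (\<lambda>h. mu G \<beta> (mu G h \<delta>)) (ker_isotropy z)"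
proof (rule inj_onI)
  fix h h' assume h: "h \<in> ker_isotropy z" "h' \<in> ker_isotropy z"
    and eq: "mu G \<beta> (mu G h \<delta>) = mu G \<beta> (mu G h' \<delta>)"
  have "mu G h \<delta> = mu G h' \<delta>"
    by (rule mu_cancel_left[OF _ _ eq]) (use h \<beta> \<delta> in \<open>simp_all add: ker_isotropy_iff rg_mu\<close>)
  then show "h = h'"
    by (rule mu_cancel_right[rotated 2]) (use h \<delta> in \<open>simp_all add: ker_isotropy_iff\<close>)
qed

lemma ker_isotropy_translate_onto:
  assumes \<beta>: "sr G \<beta> = z" and \<delta>: "rg G \<delta> = z"
    and a: "rg G a = rg G \<beta>" "sr G a = sr G \<delta>" "c a = c \<beta> + c \<delta>"
  obtains h where "h \<in> ker_isotropy z" "mu G \<beta> (mu G h \<delta>) = a"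
proof
  define h where "h = mu G (iv G \<beta>) (mu G a (iv G \<delta>))"
  show "h \<in> ker_isotropy z"
    unfolding h_def ker_isotropy_iff using \<beta> \<delta> a by (simp add: c_mu c_iv rg_mu sr_mu add.assoc)
  have "mu G h \<delta> = mu G (iv G \<beta>) (mu G (mu G a (iv G \<delta>)) \<delta>)"
    unfolding h_def by (rule mu_assoc) (simp_all add: a rg_mu sr_mu)
  also have "\<dots> = mu G (iv G \<beta>) a" by (simp add: mu_mu_iv a(2))
  finally show "mu G \<beta> (mu G h \<delta>) = a" by (simp add: mu_iv_mu a(1))
qed

lemma ker_isotropy_factorisation:
  assumes \<beta>: "sr G \<beta> = z" and \<delta>: "rg G \<delta> = z" and \<epsilon>: "rg G \<epsilon> = z" and k: "k \<in> ker_isotropy z"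
    and q: "sr G a = rg G a'" "mu G a a' = mu G \<beta> (mu G k \<epsilon>)"
    and a: "sr G a = sr G \<delta>" "c a = c \<beta> + c \<delta>"
  obtains h1 h2 where "h1 \<in> ker_isotropy z" "mu G \<beta> (mu G h1 \<delta>) = a"
    "h2 \<in> ker_isotropy z" "mu G (iv G \<delta>) (mu G h2 \<epsilon>) = a'" "mu G h1 h2 = k"
proof -
  have kz: "sr G k = z" "rg G k = z" "c k = 0" using k by (simp_all add: ker_isotropy_iff)
  have ra: "rg G a = rg G \<beta>" using rg_mu[OF q(1)] q(2) \<beta> kz \<epsilon> by (simp add: rg_mu)
  have sa': "sr G a' = sr G \<epsilon>" using sr_mu[OF q(1)] q(2) \<beta> kz \<epsilon> by (simp add: rg_mu sr_mu)
  have ra': "rg G a' = rg G (iv G \<delta>)" using q(1) a(1) by simp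
  have "c a + c a' = c \<beta> + c \<epsilon>"
    using c_mu[OF q(1)] q(2) c_mu[of \<beta> "mu G k \<epsilon>"] c_mu[of k \<epsilon>] \<beta> kz \<epsilon> by (simp add: rg_mu)
  then have "c \<delta> + c a' = c \<epsilon>" using a(2) by (simp add: add.assoc)
  then have "c a' = - c \<delta> + c \<epsilon>" by (metis minus_add_cancel)
  then have ca': "c a' = c (iv G \<delta>) + c \<epsilon>" by (simp add: c_iv)
  obtain h1 where h1: "h1 \<in> ker_isotropy z" "mu G \<beta> (mu G h1 \<delta>) = a"
    using ker_isotropy_translate_onto[OF \<beta> \<delta> ra a] .
  have "sr G (iv G \<delta>) = z" using \<delta> by simp
  then obtain h2 where h2: "h2 \<in> ker_isotropy z" "mu G (iv G \<delta>) (mu G h2 \<epsilon>) = a'"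
    using ker_isotropy_translate_onto[OF _ \<epsilon> ra' sa' ca'] by blast
  have z: "sr G h1 = z" "rg G h1 = z" "sr G h2 = z" "rg G h2 = z"
    using h1(1) h2(1) by (simp_all add: ker_isotropy_iff)
  have "mu G \<beta> (mu G (mu G h1 h2) \<epsilon>) = mu G \<beta> (mu G k \<epsilon>)"
    using mu_translate_product[of \<beta> h1 \<delta> h2 \<epsilon>] z \<beta> \<delta> \<epsilon> h1(2) h2(2) q(2) by simp
  then have "mu G (mu G h1 h2) \<epsilon> = mu G k \<epsilon>"
    by (rule mu_cancel_left[rotated 2]) (simp_all add: z kz \<beta> \<epsilon> rg_mu sr_mu)
  then have "mu G h1 h2 = k"
    by (rule mu_cancel_right[rotated 2]) (simp_all add: z kz \<epsilon> sr_mu)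
  then show ?thesis using that h1 h2 by blast
qed

lemma isotropy_slice_grp_ring:
  assumes f: "compact (fsupp f)" and \<beta>: "sr G \<beta> = z" and \<delta>: "rg G \<delta> = z"
  shows "isotropy_slice f \<beta> \<delta> z \<in> grp_ring (ker_isotropy z)"
proof -
  let ?t = "\<lambda>h. mu G \<beta> (mu G h \<delta>)"
  have supp: "fsupp (isotropy_slice f \<beta> \<delta> z) \<subseteq> ker_isotropy z"
    by (auto simp: isotropy_slice_def split: if_splits)
  have "inj_on ?t (fsupp (isotropy_slice f \<beta> \<delta> z))"
    using inj_on_isotropy_translate[OF \<beta> \<delta>] supp by (rule inj_on_subset)
  moreover have "?t ` fsupp (isotropy_slice f \<beta> \<delta> z) \<subseteq> {a \<in> fsupp f. sr G a = sr G \<delta>}"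
  proof (rule image_subsetI)
    fix h assume "h \<in> fsupp (isotropy_slice f \<beta> \<delta> z)"
    then have "h \<in> ker_isotropy z" "f (?t h) \<noteq> 0" by (auto simp: isotropy_slice_def split: if_splits)
    then show "?t h \<in> {a \<in> fsupp f. sr G a = sr G \<delta>}"
      using \<beta> \<delta> by (simp add: ker_isotropy_iff sr_mu rg_mu)
  qed
  ultimately have "finite (fsupp (isotropy_slice f \<beta> \<delta> z))"
    using finite_sr_fibre[OF f] by (rule inj_on_finite)
  then show ?thesis unfolding grp_ring_def using supp by simp
qed

lemma isotropy_slice_conv_diag:
  fixes f d :: "'g \<Rightarrow> 'r::comm_ring_1"
  assumes d: "fsupp d \<subseteq> G0" "d z = 1" and \<beta>: "sr G \<beta> = z" and z: "z \<in> G0"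
  shows "isotropy_slice (conv G f d) \<beta> z z = isotropy_slice f \<beta> z z"
proof
  fix h
  show "isotropy_slice (conv G f d) \<beta> z z h = isotropy_slice f \<beta> z z h"
  proof (cases "h \<in> ker_isotropy z")
    case True
    then have "sr G (mu G \<beta> (mu G h z)) = z"
      using \<beta> z by (simp add: ker_isotropy_iff sr_mu rg_mu rg_unit sr_unit)
    then show ?thesis using True d by (simp add: isotropy_slice_def conv_diag_right)
  qed (simp add: isotropy_slice_def)
qed

text \<open>If every factorisation of \<beta> k \<epsilon> charged by f and g passes through \<beta> H \<delta>, where
  H = ker_isotropy z, then (h1, h2) \<mapsto> (\<beta> h1 \<delta>, \<delta>\<inverse> h2 \<epsilon>) matches these factorisations with those
  of k in H, so the groupoid convolution becomes a group ring convolution.\<close>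

lemma conv_eq_grp_conv_isotropy_slices:
  fixes f g :: "'g \<Rightarrow> 'r::comm_ring_1"
  assumes \<beta>: "sr G \<beta> = z" and \<delta>: "rg G \<delta> = z" and \<epsilon>: "rg G \<epsilon> = z" and k: "k \<in> ker_isotropy z"
    and factor: "\<And>a a'. sr G a = rg G a' \<Longrightarrow> mu G a a' = mu G \<beta> (mu G k \<epsilon>) \<Longrightarrow> f a \<noteq> 0
                   \<Longrightarrow> g a' \<noteq> 0 \<Longrightarrow> sr G a = sr G \<delta> \<and> c a = c \<beta> + c \<delta>"
  shows "conv G f g (mu G \<beta> (mu G k \<epsilon>))
           = grp_conv G (ker_isotropy z) (isotropy_slice f \<beta> \<delta> z) (isotropy_slice g (iv G \<delta>) \<epsilon> z) k"
proof -
  let ?H = "ker_isotropy z" and ?\<eta> = "mu G \<beta> (mu G k \<epsilon>)"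
  define F where "F = isotropy_slice f \<beta> \<delta> z"
  define F' where "F' = isotropy_slice g (iv G \<delta>) \<epsilon> z"
  define S where "S = {(h1,h2). h1 \<in> ?H \<and> h2 \<in> ?H \<and> mu G h1 h2 = k \<and> F h1 \<noteq> 0 \<and> F' h2 \<noteq> 0}"
  define T where "T = {(a,a'). sr G a = rg G a' \<and> mu G a a' = ?\<eta> \<and> f a \<noteq> 0 \<and> g a' \<noteq> 0}"
  define \<phi> where "\<phi> = (\<lambda>(h1,h2). (mu G \<beta> (mu G h1 \<delta>), mu G (iv G \<delta>) (mu G h2 \<epsilon>)))"
  have H: "sr G h = z" "rg G h = z" if "h \<in> ?H" for h
    using that by (simp_all add: ker_isotropy_iff)
  have iv\<delta>: "sr G (iv G \<delta>) = z" using \<delta> by simp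
  have prod: "mu G (mu G \<beta> (mu G h1 \<delta>)) (mu G (iv G \<delta>) (mu G h2 \<epsilon>)) = mu G \<beta> (mu G (mu G h1 h2) \<epsilon>)"
    if "h1 \<in> ?H" "h2 \<in> ?H" for h1 h2
    using H[OF that(1)] H[OF that(2)] \<beta> \<delta> \<epsilon> by (intro mu_translate_product) simp_all
  have into: "\<phi> p \<in> T" if "p \<in> S" for p
  proof -
    obtain h1 h2 where p0: "p = (h1,h2)" by (cases p)
    then have p: "h1 \<in> ?H" "h2 \<in> ?H" "mu G h1 h2 = k" "F h1 \<noteq> 0" "F' h2 \<noteq> 0"
      using that unfolding S_def by simp_all
    show ?thesis
      using p p0 prod[OF p(1,2)] H[OF p(1)] H[OF p(2)] \<beta> \<delta> \<epsilon>
      unfolding T_def \<phi>_def F_def F'_def isotropy_slice_def by (simp add: rg_mu sr_mu)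
  qed
  have onto: "q \<in> \<phi> ` S" if "q \<in> T" for q
  proof -
    obtain a a' where q0: "q = (a,a')" by (cases q)
    then have q: "sr G a = rg G a'" "mu G a a' = ?\<eta>" "f a \<noteq> 0" "g a' \<noteq> 0"
      using that unfolding T_def by simp_all
    have "sr G a = sr G \<delta>" "c a = c \<beta> + c \<delta>" using factor[OF q] by auto
    then obtain h1 h2 where h1: "h1 \<in> ?H" "mu G \<beta> (mu G h1 \<delta>) = a"
      and h2: "h2 \<in> ?H" "mu G (iv G \<delta>) (mu G h2 \<epsilon>) = a'" and "mu G h1 h2 = k"
      by (rule ker_isotropy_factorisation[OF \<beta> \<delta> \<epsilon> k q(1,2)])
    then have "(h1,h2) \<in> S"
      using h1 h2 q(3,4) unfolding S_def F_def F'_def isotropy_slice_def by simp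
    moreover have "\<phi> (h1,h2) = q" using h1(2) h2(2) q0 unfolding \<phi>_def by simp
    ultimately show ?thesis by (rule rev_image_eqI[OF _ sym])
  qed
  have "inj_on \<phi> S"
  proof (rule inj_onI)
    fix p p' assume "p \<in> S" "p' \<in> S" and eq: "\<phi> p = \<phi> p'"
    moreover obtain h1 h2 h1' h2' where p: "p = (h1,h2)" "p' = (h1',h2')" by (cases p, cases p')
    ultimately have h: "h1 \<in> ?H" "h2 \<in> ?H" "h1' \<in> ?H" "h2' \<in> ?H"
      and e: "mu G \<beta> (mu G h1 \<delta>) = mu G \<beta> (mu G h1' \<delta>)"
        "mu G (iv G \<delta>) (mu G h2 \<epsilon>) = mu G (iv G \<delta>) (mu G h2' \<epsilon>)"
      unfolding S_def \<phi>_def by simp_all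
    have "h1 = h1'" using inj_onD[OF inj_on_isotropy_translate[OF \<beta> \<delta>] e(1) h(1,3)] .
    moreover have "h2 = h2'" using inj_onD[OF inj_on_isotropy_translate[OF iv\<delta> \<epsilon>] e(2) h(2,4)] .
    ultimately show "p = p'" using p by simp
  qed
  then have bij: "bij_betw \<phi> S T"
    unfolding bij_betw_def using into onto by blast
  have "grp_conv G ?H F F' k = (\<Sum>p\<in>S. F (fst p) * F' (snd p))"
    unfolding grp_conv_def S_def by simp
  also have "\<dots> = (\<Sum>p\<in>S. f (fst (\<phi> p)) * g (snd (\<phi> p)))"
    by (rule sum.cong) (auto simp: S_def F_def F'_def \<phi>_def isotropy_slice_def)
  also have "\<dots> = (\<Sum>q\<in>T. f (fst q) * g (snd q))"
    by (rule sum.reindex_bij_betw[OF bij])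
  also have "\<dots> = conv G f g ?\<eta>"
    unfolding conv_def T_def by simp
  finally show ?thesis unfolding F_def F'_def by simp
qed

end

section \<open>Homogeneous normalisers in the class C\<close>

locale classC_groupoid =
  fixes G :: "('g::t2_space) gpd" and c :: "'g \<Rightarrow> 'a::group_add" and R :: "'r::idom itself"
  assumes classC: "classC G c R"

sublocale classC_groupoid \<subseteq> graded_ample_groupoid G c
proof unfold_locales
  have "ample_hausdorff G" "cont_cocycle G c" using classC unfolding classC_def by auto
  then show "groupoid G" "ample_hausdorff G" "cont_cocycle G c"
    unfolding ample_hausdorff_def by auto
qed

context classC_groupoid
begin

definition good_unit :: "'g \<Rightarrow> bool" where
  "good_unit z \<longleftrightarrow> z \<in> G0 \<and> grp_ring_good G (ker_isotropy z) z R"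

lemma good_unit_dense:
  assumes "open Q" "y \<in> Q" "y \<in> G0"
  obtains z where "z \<in> Q" "good_unit z"
proof -
  obtain X where X: "X \<subseteq> G0" "G0 \<subseteq> closure X" "\<forall>x\<in>X. grp_ring_good G (ker_isotropy x) x R"
    using classC unfolding classC_def ker_isotropy_def by blast
  have "Q \<inter> X \<noteq> {}"
    using assms X(2) open_Int_closure_eq_empty[OF assms(1), of X] by blast
  then show ?thesis using that X(1,3) unfolding good_unit_def by blast
qed

lemma good_unit_no_zero_divisors:
  assumes "good_unit z" "F \<in> grp_ring (ker_isotropy z)" "F' \<in> grp_ring (ker_isotropy z)"
    "F \<noteq> (\<lambda>_. 0)" "F' \<noteq> (\<lambda>_. 0)"
  shows "grp_conv G (ker_isotropy z) F F' \<noteq> (\<lambda>_. 0 :: 'r)"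
  using assms unfolding good_unit_def grp_ring_good_def by blast

lemma good_unit_trivial_units:
  assumes "good_unit z" "F \<in> grp_ring (ker_isotropy z)" "F' \<in> grp_ring (ker_isotropy z)"
    "grp_conv G (ker_isotropy z) F F' = (\<lambda>k. if k = z then 1 else 0 :: 'r)"
    "grp_conv G (ker_isotropy z) F' F = (\<lambda>k. if k = z then 1 else 0)"
  obtains u h where "h \<in> ker_isotropy z" "F = (\<lambda>k. if k = h then u else 0)"
  using assms unfolding good_unit_def grp_ring_good_def by blast

context
  fixes m n :: "'g \<Rightarrow> 'r" and g :: 'a
  assumes mn: "(m, n) \<in> normalisers G c g"
begin

lemma normaliser_mn: "normaliser G m n"
  and c_fsupp_m: "m a \<noteq> 0 \<Longrightarrow> c a = g"
  and c_fsupp_n: "n a \<noteq> 0 \<Longrightarrow> c a = - g"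
  and compact_fsupp_m: "compact (fsupp m)"
  and compact_fsupp_n: "compact (fsupp n)"
  using mn steinbergD(2) unfolding normalisers_def homog_def by auto

lemma isotropy_slice_conv_vanishes:
  assumes z: "z \<in> G0" and b: "sr G b = z" "c b = - g" and \<gamma>: "rg G \<gamma> = z"
    and k: "k \<in> ker_isotropy z" and not_unit: "mu G b (mu G k \<gamma>) \<notin> G0"
  shows "grp_conv G (ker_isotropy z) (isotropy_slice n b z z) (isotropy_slice m z \<gamma> z) k = 0"
proof -
  \<comment> \<open>cut n down by a unit neighbourhood V of z that meets no other range of supp m over sr \<gamma>\<close>
  define F where "F = rg G ` {a \<in> fsupp m. sr G a = sr G \<gamma>}"
  have "finite F" unfolding F_def using finite_sr_fibre[OF compact_fsupp_m] by simp
  then obtain V where V: "compact V" "open V" "V \<subseteq> G0" "z \<in> V" "V \<inter> (F - {z}) = {}"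
    using compact_open_unit_nbhd_avoiding[OF z, of "F - {z}"] by blast
  define d :: "'g \<Rightarrow> 'r" where "d = indicator V"
  have d: "d \<in> diag G" unfolding d_def using indicator_diag V(1-3) by blast
  have nd: "conv G n d a = n a * d (sr G a)" for a using conv_diag_right[OF diag_fsupp[OF d]] .
  have E: "conv G (conv G n d) m \<in> diag G" using normaliser_mn d unfolding normaliser_def by blast
  have "conv G (conv G n d) m (mu G b (mu G k \<gamma>)) = 0"
    using diag_fsupp[OF E] not_unit by auto
  moreover have "conv G (conv G n d) m (mu G b (mu G k \<gamma>))
      = grp_conv G (ker_isotropy z) (isotropy_slice (conv G n d) b z z) (isotropy_slice m (iv G z) \<gamma> z) k"
  proof (rule conv_eq_grp_conv_isotropy_slices[OF b(1) rg_unit[OF z] \<gamma> k])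
    fix a a' assume aa': "sr G a = rg G a'" "mu G a a' = mu G b (mu G k \<gamma>)"
      and "conv G n d a \<noteq> 0" "m a' \<noteq> 0"
    then have "n a * d (sr G a) \<noteq> 0" using nd by simp
    then have a: "n a \<noteq> 0" "sr G a \<in> V" unfolding d_def by (auto simp: indicator_def split: if_splits)
    have "sr G a' = sr G \<gamma>"
      using sr_mu[OF aa'(1)] aa'(2) b k \<gamma> by (simp add: ker_isotropy_iff rg_mu sr_mu)
    then have "sr G a \<in> F" using aa'(1) \<open>m a' \<noteq> 0\<close> unfolding F_def by auto
    then have "sr G a = z" using V(5) a(2) by blast
    then show "sr G a = sr G z \<and> c a = c b + c z"
      using c_fsupp_n[OF a(1)] b(2) z by (simp add: sr_unit c_unit)
  qed
  moreover have "isotropy_slice (conv G n d) b z z = isotropy_slice n b z z"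
    using diag_fsupp[OF d] V(4) b(1) z unfolding d_def by (intro isotropy_slice_conv_diag) simp_all
  ultimately show ?thesis using z by (simp add: iv_unit)
qed

lemma n_vanishes_over_good_unit:
  assumes z: "good_unit z" and \<gamma>0: "m \<gamma>0 \<noteq> 0" "rg G \<gamma>0 = z" and \<gamma>1: "m \<gamma>1 \<noteq> 0" "rg G \<gamma>1 = z"
    and ne: "sr G \<gamma>1 \<noteq> sr G \<gamma>0" and b: "sr G b = z"
  shows "n b = 0"
proof (rule ccontr)
  assume nb: "n b \<noteq> 0"
  have zG: "z \<in> G0" and zH: "z \<in> ker_isotropy z"
    using z unit_in_ker_isotropy unfolding good_unit_def by auto
  obtain \<gamma> where \<gamma>: "m \<gamma> \<noteq> 0" "rg G \<gamma> = z" "rg G b \<noteq> sr G \<gamma>"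
    using \<gamma>0 \<gamma>1 ne by (cases "rg G b = sr G \<gamma>0") auto
  let ?N = "isotropy_slice n b z z" and ?M = "isotropy_slice m z \<gamma> z"
  \<comment> \<open>the two slices would be zero divisors in the isotropy group ring\<close>
  have "grp_conv G (ker_isotropy z) ?N ?M = (\<lambda>_. 0)"
  proof
    fix k
    show "grp_conv G (ker_isotropy z) ?N ?M k = 0"
    proof (cases "k \<in> ker_isotropy z")
      case True
      then have "rg G (mu G b (mu G k \<gamma>)) = rg G b" "sr G (mu G b (mu G k \<gamma>)) = sr G \<gamma>"
        using b \<gamma>(2) by (simp_all add: ker_isotropy_iff rg_mu sr_mu)
      then have "mu G b (mu G k \<gamma>) \<notin> G0" using \<gamma>(3) unit_sr_eq_rg by metis
      then show ?thesis
        using isotropy_slice_conv_vanishes[OF zG b c_fsupp_n[OF nb] \<gamma>(2) True] by simp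
    qed (rule grp_conv_outside_ker_isotropy)
  qed
  moreover have "?N \<in> grp_ring (ker_isotropy z)"
    using isotropy_slice_grp_ring[OF compact_fsupp_n b rg_unit[OF zG]] .
  moreover have "?M \<in> grp_ring (ker_isotropy z)"
    using isotropy_slice_grp_ring[OF compact_fsupp_m sr_unit[OF zG] \<gamma>(2)] .
  moreover have "?N z \<noteq> 0" "?M z \<noteq> 0"
    using zH nb \<gamma> b zG by (simp_all add: isotropy_slice_def mu_rg_eq mu_sr_eq sr_unit)
  then have "?N \<noteq> (\<lambda>_. 0)" "?M \<noteq> (\<lambda>_. 0)" by (auto simp: fun_eq_iff)
  ultimately show False using good_unit_no_zero_divisors[OF z] by blast
qed

lemma sr_eq_over_good_unit:
  assumes z: "good_unit z" and \<gamma>0: "m \<gamma>0 \<noteq> 0" "rg G \<gamma>0 = z" and \<gamma>1: "m \<gamma>1 \<noteq> 0" "rg G \<gamma>1 = z"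
  shows "sr G \<gamma>1 = sr G \<gamma>0"
proof (rule ccontr)
  assume ne: "sr G \<gamma>1 \<noteq> sr G \<gamma>0"
  have zG: "z \<in> G0" using z unfolding good_unit_def by simp
  have "conv G m n z = 0"
  proof (rule ccontr)
    assume "conv G m n z \<noteq> 0"
    then have "z \<in> setmul (fsupp m) (fsupp n)" using fsupp_conv[of m n] by auto
    then obtain a b where ab: "b \<in> fsupp n" "sr G a = rg G b" "z = mu G a b" by (auto elim: setmulE)
    then have "sr G b = z" using sr_mu[OF ab(2)] sr_unit[OF zG] by simp
    then show False using n_vanishes_over_good_unit[OF z \<gamma>0 \<gamma>1 ne] ab(1) by simp
  qed
  moreover have "conv G m n z = 1"
    using conv_normaliser_at_rg[OF normaliser_mn \<gamma>0(1)] \<gamma>0(2) by simp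
  ultimately show False by simp
qed

lemma isotropy_slice_right_inverse:
  assumes z: "good_unit z" and \<gamma>0: "m \<gamma>0 \<noteq> 0" "rg G \<gamma>0 = z"
  shows "grp_conv G (ker_isotropy z) (isotropy_slice m z \<gamma>0 z) (isotropy_slice n (iv G \<gamma>0) z z)
           = (\<lambda>k. if k = z then 1 else 0)"
proof
  fix k
  have zG: "z \<in> G0" and zH: "z \<in> ker_isotropy z"
    using z unit_in_ker_isotropy unfolding good_unit_def by auto
  show "grp_conv G (ker_isotropy z) (isotropy_slice m z \<gamma>0 z) (isotropy_slice n (iv G \<gamma>0) z z) k
      = (if k = z then 1 else 0)"
  proof (cases "k \<in> ker_isotropy z")
    case k: True
    have "conv G m n (mu G z (mu G k z))
        = grp_conv G (ker_isotropy z) (isotropy_slice m z \<gamma>0 z) (isotropy_slice n (iv G \<gamma>0) z z) k"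
    proof (rule conv_eq_grp_conv_isotropy_slices[OF sr_unit[OF zG] \<gamma>0(2) rg_unit[OF zG] k])
      fix a a' assume aa': "sr G a = rg G a'" "mu G a a' = mu G z (mu G k z)" "m a \<noteq> 0" "n a' \<noteq> 0"
      have "rg G a = z"
        using rg_mu[OF aa'(1)] aa'(2) k zG by (simp add: ker_isotropy_iff rg_mu rg_unit sr_unit)
      then show "sr G a = sr G \<gamma>0 \<and> c a = c z + c \<gamma>0"
        using sr_eq_over_good_unit[OF z \<gamma>0 aa'(3)] c_fsupp_m[OF aa'(3)] c_fsupp_m[OF \<gamma>0(1)]
          c_unit[OF zG]
        by simp
    qed
    moreover have "mu G z (mu G k z) = k" using k by (simp add: ker_isotropy_iff mu_rg_eq mu_sr_eq)
    moreover have "conv G m n k = (if k = z then 1 else 0)"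
    proof (cases "k = z")
      case False
      then have "k \<notin> G0" using ker_isotropy_unit_iff[OF k] by simp
      then show ?thesis
        using False diag_fsupp[OF conv_normaliser_in_diag[OF normaliser_mn]] by auto
    qed (use conv_normaliser_at_rg[OF normaliser_mn \<gamma>0(1)] \<gamma>0(2) in simp)
    ultimately show ?thesis by simp
  next
    case False
    then show ?thesis using grp_conv_outside_ker_isotropy[OF False] zH by auto
  qed
qed

lemma isotropy_slice_left_inverse:
  assumes z: "good_unit z" and \<gamma>0: "m \<gamma>0 \<noteq> 0" "rg G \<gamma>0 = z"
  shows "grp_conv G (ker_isotropy z) (isotropy_slice n (iv G \<gamma>0) z z) (isotropy_slice m z \<gamma>0 z)
           = (\<lambda>k. if k = z then 1 else 0)"
proof
  fix k
  have zG: "z \<in> G0" and zH: "z \<in> ker_isotropy z"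
    using z unit_in_ker_isotropy unfolding good_unit_def by auto
  show "grp_conv G (ker_isotropy z) (isotropy_slice n (iv G \<gamma>0) z z) (isotropy_slice m z \<gamma>0 z) k
      = (if k = z then 1 else 0)"
  proof (cases "k \<in> ker_isotropy z \<and> k \<noteq> z")
    case True
    have "sr G k = rg G \<gamma>0" "rg G k = rg G \<gamma>0" using True \<gamma>0(2) by (simp_all add: ker_isotropy_iff)
    then have not_unit: "mu G (iv G \<gamma>0) (mu G k \<gamma>0) \<notin> G0"
      using conjugate_in_unit_space_imp_unit True \<gamma>0(2) by blast
    have "sr G (iv G \<gamma>0) = z" "c (iv G \<gamma>0) = - g"
      using \<gamma>0(2) c_fsupp_m[OF \<gamma>0(1)] by (simp_all add: c_iv)
    then show ?thesis
      using isotropy_slice_conv_vanishes[OF zG _ _ \<gamma>0(2) _ not_unit] True by simp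
  next
    case False
    show ?thesis
    proof (cases "k = z")
      case True
      have "grp_conv G (ker_isotropy z) (isotropy_slice n (iv G \<gamma>0) z z) (isotropy_slice m z \<gamma>0 z) z
          = grp_conv G (ker_isotropy z) (isotropy_slice m z \<gamma>0 z) (isotropy_slice n (iv G \<gamma>0) z z) z"
        by (rule grp_conv_comm_at_unit[OF zG])
      then show ?thesis using True isotropy_slice_right_inverse[OF z \<gamma>0] by simp
    next
      case k: False
      then have "k \<notin> ker_isotropy z" using False by simp
      then show ?thesis using grp_conv_outside_ker_isotropy k by simp
    qed
  qed
qed

lemma normaliser_over_good_unit:
  assumes z: "good_unit z" and \<gamma>0: "m \<gamma>0 \<noteq> 0" "rg G \<gamma>0 = z"
  shows "\<And>\<gamma>. m \<gamma> \<noteq> 0 \<Longrightarrow> rg G \<gamma> = z \<Longrightarrow> \<gamma> = \<gamma>0" and "n (iv G \<gamma>0) \<noteq> 0"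
proof -
  have zG: "z \<in> G0" and zH: "z \<in> ker_isotropy z"
    using z unit_in_ker_isotropy unfolding good_unit_def by auto
  let ?M = "isotropy_slice m z \<gamma>0 z" and ?N = "isotropy_slice n (iv G \<gamma>0) z z"
  have "?M \<in> grp_ring (ker_isotropy z)"
    using isotropy_slice_grp_ring[OF compact_fsupp_m sr_unit[OF zG] \<gamma>0(2)] .
  moreover have "?N \<in> grp_ring (ker_isotropy z)"
    using isotropy_slice_grp_ring[OF compact_fsupp_n _ rg_unit[OF zG]] \<gamma>0(2) by simp
  \<comment> \<open>the slice of m is a unit of the isotropy group ring, hence trivial\<close>
  ultimately obtain u h where h: "h \<in> ker_isotropy z" "?M = (\<lambda>k. if k = h then u else 0)"
    using isotropy_slice_right_inverse[OF z \<gamma>0] isotropy_slice_left_inverse[OF z \<gamma>0]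
    by (rule good_unit_trivial_units[OF z])
  have "?M z = m \<gamma>0" using zH \<gamma>0(2) by (simp add: isotropy_slice_def mu_rg_eq)
  then have hz: "h = z" using h(2) \<gamma>0(1) by (auto simp: fun_eq_iff split: if_splits)
  show unique: "\<gamma> = \<gamma>0" if \<gamma>: "m \<gamma> \<noteq> 0" "rg G \<gamma> = z" for \<gamma>
  proof -
    have s: "sr G \<gamma> = sr G \<gamma>0" using sr_eq_over_good_unit[OF z \<gamma>0 \<gamma>] .
    define k where "k = mu G \<gamma> (iv G \<gamma>0)"
    have k: "k \<in> ker_isotropy z"
      unfolding k_def ker_isotropy_iff using \<gamma> \<gamma>0 s c_fsupp_m[OF \<gamma>(1)] c_fsupp_m[OF \<gamma>0(1)]
      by (simp add: c_mu c_iv rg_mu sr_mu)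
    have k\<gamma>0: "mu G k \<gamma>0 = \<gamma>" unfolding k_def using s by (rule mu_mu_iv)
    then have "?M k \<noteq> 0" using k \<gamma> by (simp add: isotropy_slice_def mu_rg_eq)
    then have "k = z" using h(2) hz by (auto split: if_splits)
    then show ?thesis using k\<gamma>0 \<gamma>0(2) by (simp add: mu_rg_eq)
  qed
  have "conv G m n z = m \<gamma>0 * n (mu G (iv G \<gamma>0) z)"
    using unique \<gamma>0(2) zG by (intro conv_at) (auto simp: rg_unit)
  then show "n (iv G \<gamma>0) \<noteq> 0"
    using conv_normaliser_at_rg[OF normaliser_mn \<gamma>0(1)] \<gamma>0(2) by (auto simp: mu_sr_eq)
qed

lemma inj_on_rg_fsupp_normaliser: "inj_on (rg G) (fsupp m)"
proof (rule inj_onI, rule ccontr)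
  fix a1 a2 assume a: "a1 \<in> fsupp m" "a2 \<in> fsupp m" "rg G a1 = rg G a2" and ne: "a1 \<noteq> a2"
  obtain O1 O2 where O: "open O1" "open O2" "a1 \<in> O1" "a2 \<in> O2" "O1 \<inter> O2 = {}"
    using hausdorff[OF ne] by blast
  define Q where "Q = rg G ` (O1 \<inter> fsupp m) \<inter> rg G ` (O2 \<inter> fsupp m)"
  have "open Q"
    unfolding Q_def using O(1,2) steinbergD(3)[OF normaliser_steinberg(1)[OF normaliser_mn]]
    by (intro open_Int open_rg_image) auto
  moreover have "rg G a1 \<in> Q" using a O unfolding Q_def by (auto intro: rev_image_eqI)
  ultimately obtain z where z: "z \<in> Q" "good_unit z"
    using good_unit_dense rg_in_unit_space by blast
  then obtain b1 b2 where "b1 \<in> O1" "m b1 \<noteq> 0" "rg G b1 = z" "b2 \<in> O2" "m b2 \<noteq> 0" "rg G b2 = z"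
    unfolding Q_def by (auto simp: image_iff)
  then show False
    using normaliser_over_good_unit(1)[OF z(2)] O(5) by blast
qed

lemma normaliser_iv_nonzero:
  assumes "m \<gamma> \<noteq> 0"
  shows "n (iv G \<gamma>) \<noteq> 0"
proof (rule ccontr)
  assume "\<not> n (iv G \<gamma>) \<noteq> 0"
  define P where "P = fsupp m \<inter> iv G -` (- fsupp n)"
  have "open P"
    unfolding P_def
    using normaliser_steinberg[OF normaliser_mn] steinbergD(3,4) open_vimage_continuous[OF continuous_iv]
    by (metis open_Compl open_Int closed_def)
  moreover have "\<gamma> \<in> P" unfolding P_def using assms \<open>\<not> n (iv G \<gamma>) \<noteq> 0\<close> by simp
  ultimately obtain z where z: "z \<in> rg G ` P" "good_unit z"
    using good_unit_dense[OF open_rg_image] rg_in_unit_space by blast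
  then obtain b where "b \<in> P" "rg G b = z" by blast
  then show False
    using normaliser_over_good_unit(2)[OF z(2)] unfolding P_def by auto
qed

end

lemma bisection_normaliser_of_normalisers:
  fixes m n :: "'g \<Rightarrow> 'r"
  assumes mn: "(m, n) \<in> normalisers G c g"
  shows "bisection_normaliser m n"
proof -
  have nm: "(n, m) \<in> normalisers G c (- g)" using mn by (rule normalisers_swap)
  have m: "m \<in> steinberg G" "n \<in> steinberg G"
    using normaliser_steinberg[OF normaliser_mn[OF mn]] by auto
  have inj: "inj_on (rg G) (fsupp m)" "inj_on (rg G) (fsupp n)"
    using inj_on_rg_fsupp_normaliser[OF mn] inj_on_rg_fsupp_normaliser[OF nm] .
  have mn_iv: "\<And>a. m a \<noteq> 0 \<Longrightarrow> n (iv G a) \<noteq> 0" and nm_iv: "\<And>b. n b \<noteq> 0 \<Longrightarrow> m (iv G b) \<noteq> 0"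
    using normaliser_iv_nonzero[OF mn] normaliser_iv_nonzero[OF nm] by auto
  have supp: "fsupp n = iv G ` fsupp m"
    using mn_iv nm_iv by (auto intro: image_eqI[of _ "iv G", OF iv_iv[symmetric]])
  then have "inj_on (sr G) (fsupp m)" using inj(2) by (simp add: inj_on_rg_iv_image)
  moreover have "m a * n (iv G a) = 1" if "m a \<noteq> 0" for a
    using conv_at_mu[OF inj(1) that, of "iv G a" n] conv_normaliser_at_rg[OF normaliser_mn[OF mn] that]
    by simp
  ultimately show ?thesis
    unfolding bisection_normaliser_def using m inj(1) supp by simp
qed

end

section \<open>The groupoid of germs of normalisers\<close>

type_synonym ('g, 'r, 'a) triple = "(('g \<Rightarrow> 'r) \<times> ('g \<Rightarrow> 'r)) \<times> 'a \<times> 'g"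

context classC_groupoid
begin

abbreviation T :: "('g, 'r, 'a) triple set" where
  "T \<equiv> Tset G c"

abbreviation Tr :: "('g, 'r, 'a) triple rel" where
  "Tr \<equiv> Trel G c"

abbreviation W :: "('g, 'r, 'a) triple set set" where
  "W \<equiv> T // Tr"

lemma Tset_iff [simp]: "((m,n),g,x) \<in> T \<longleftrightarrow> (m,n) \<in> normalisers G c g \<and> x \<in> sr G ` fsupp m"
  unfolding Tset_def by simp

lemma Tset_bisection_normaliser: "((m,n),g,x) \<in> T \<Longrightarrow> bisection_normaliser m n"
  by (auto intro: bisection_normaliser_of_normalisers)

lemma Tset_supp_lift:
  assumes "((m,n),g,x) \<in> T"
  shows "supp_lift m x \<in> fsupp m" "sr G (supp_lift m x) = x"
proof -
  have "inj_on (sr G) (fsupp m)"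
    using Tset_bisection_normaliser[OF assms] unfolding bisection_normaliser_def by blast
  moreover have "x \<in> sr G ` fsupp m" using assms by simp
  ultimately show "supp_lift m x \<in> fsupp m" "sr G (supp_lift m x) = x" by (rule supp_lift_in)+
qed

definition germ :: "('g, 'r, 'a) triple \<Rightarrow> 'g" where
  "germ t = supp_lift (fst (fst t)) (snd (snd t))"

lemma germ_simp [simp]: "germ ((m,n),g,x) = supp_lift m x"
  by (simp add: germ_def)

lemma Trel_subset: "Tr \<subseteq> T \<times> T"
  unfolding Trel_def by (auto simp del: Tset_iff)

lemma Trel_iff:
  assumes t1: "t1 \<in> T" and t2: "t2 \<in> T"
  shows "(t1, t2) \<in> Tr \<longleftrightarrow> germ t1 = germ t2"
proof -
  obtain m1 n1 g1 x1 m2 n2 g2 x2 where t: "t1 = ((m1,n1),g1,x1)" "t2 = ((m2,n2),g2,x2)"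
    by (metis prod.collapse)
  have T1: "((m1,n1),g1,x1) \<in> T" and T2: "((m2,n2),g2,x2) \<in> T" using t t1 t2 by simp_all
  have b1: "bisection_normaliser m1 n1" and b2: "bisection_normaliser m2 n2"
    using Tset_bisection_normaliser T1 T2 by blast+
  have p1: "m1 (supp_lift m1 x1) \<noteq> 0" "sr G (supp_lift m1 x1) = x1"
    and p2: "m2 (supp_lift m2 x2) \<noteq> 0" "sr G (supp_lift m2 x2) = x2"
    using Tset_supp_lift[OF T1] Tset_supp_lift[OF T2] by auto
  show ?thesis
  proof
    assume "(t1, t2) \<in> Tr"
    then obtain U where "x1 = x2" "U \<subseteq> G0" "x1 \<in> U"
        "conv G (conv G m1 (indicator U)) n2 \<in> diag G"
      unfolding Trel_def t by auto
    then show "germ t1 = germ t2"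
      using cutoff_conv_in_diag_imp_eq[OF b1 b2 p1(1) p2(1) p1(2)] p2(2) t by simp
  next
    assume "germ t1 = germ t2"
    then have eq: "supp_lift m1 x1 = supp_lift m2 x2" and x: "x1 = x2"
      using t p1(2) p2(2) by auto
    obtain U where "compact U" "open U" "U \<subseteq> G0" "x1 \<in> U"
        "conv G (conv G m1 (indicator U)) n2 \<in> diag G"
      using cutoff_conv_in_diag[OF b1 b2 p1(1)] p2(1) p1(2) eq by metis
    then show "(t1, t2) \<in> Tr"
      unfolding Trel_def t using T1 T2 x by (simp del: Tset_iff) blast
  qed
qed

lemma Trel_eq_germ_kernel: "Tr = {(t1, t2). t1 \<in> T \<and> t2 \<in> T \<and> germ t1 = germ t2}"
proof (intro equalityI subsetI)
  fix p assume "p \<in> Tr"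
  then show "p \<in> {(t1, t2). t1 \<in> T \<and> t2 \<in> T \<and> germ t1 = germ t2}"
    using Trel_subset Trel_iff by (cases p) auto
next
  fix p assume "p \<in> {(t1, t2). t1 \<in> T \<and> t2 \<in> T \<and> germ t1 = germ t2}"
  then show "p \<in> Tr" using Trel_iff by (cases p) auto
qed

lemma equiv_Trel: "equiv T Tr"
  unfolding Trel_eq_germ_kernel by (auto intro!: equivI refl_onI symI transI)

definition psi :: "('g, 'r, 'a) triple set \<Rightarrow> 'g" where
  "psi w = germ (SOME t. t \<in> w)"

lemma psi_class:
  assumes "t \<in> T"
  shows "psi (Tr `` {t}) = germ t"
proof -
  define s where "s = (SOME t'. t' \<in> Tr `` {t})"
  have "t \<in> Tr `` {t}" using equiv_class_self[OF equiv_Trel assms] .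
  then have "s \<in> Tr `` {t}" unfolding s_def by (rule someI)
  then have ts: "(t, s) \<in> Tr" by simp
  then have "s \<in> T" using Trel_subset by blast
  then have "germ t = germ s" using Trel_iff[OF assms] ts by blast
  then show ?thesis unfolding psi_def s_def by simp
qed

lemma indicator_triple:
  assumes A: "compact A" "open A" "inj_on (rg G) A" "inj_on (sr G) A"
    and \<eta>: "\<eta> \<in> A" "A \<subseteq> c -` {c \<eta>}"
  shows "((indicator A, indicator (iv G ` A)), c \<eta>, sr G \<eta>) \<in> T"
    and "germ ((indicator A, indicator (iv G ` A)), c \<eta>, sr G \<eta>) = \<eta>"
proof -
  have "normaliser G (indicator A :: 'g \<Rightarrow> 'r) (indicator (iv G ` A))"
    using bisection_normaliser_imp_normaliser[OF bisection_normaliser_indicator[OF A]] .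
  moreover have "(indicator A :: 'g \<Rightarrow> 'r) \<in> homog G c (c \<eta>)"
    using indicator_steinberg[OF A(1,2)] \<eta>(2) unfolding homog_def by simp
  moreover have "(indicator (iv G ` A) :: 'g \<Rightarrow> 'r) \<in> homog G c (- c \<eta>)"
    using indicator_steinberg[OF compact_iv_image[OF A(1)] open_iv_image[OF A(2)]] \<eta>(2)
    unfolding homog_def by (auto simp: c_iv)
  ultimately show "((indicator A, indicator (iv G ` A)), c \<eta>, sr G \<eta>) \<in> T"
    using \<eta>(1) by (simp add: normalisers_def)
  show "germ ((indicator A, indicator (iv G ` A)), c \<eta>, sr G \<eta>) = \<eta>"
    using supp_lift_eq[of "indicator A :: 'g \<Rightarrow> 'r"] A(4) \<eta>(1) by simp
qed

lemma bij_psi: "bij_betw psi W UNIV"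
proof -
  have "inj_on psi W"
  proof (rule inj_onI)
    fix w1 w2 assume "w1 \<in> W" "w2 \<in> W" and eq: "psi w1 = psi w2"
    then obtain t1 t2 where t: "t1 \<in> T" "t2 \<in> T" "w1 = Tr `` {t1}" "w2 = Tr `` {t2}"
      by (auto elim!: quotientE)
    then have "(t1, t2) \<in> Tr" using eq psi_class Trel_iff by simp
    then show "w1 = w2" using t equiv_class_eq[OF equiv_Trel] by simp
  qed
  moreover have "\<eta> \<in> psi ` W" for \<eta>
  proof -
    obtain A where A: "compact A" "open A" "\<eta> \<in> A" "A \<subseteq> c -` {c \<eta>}"
        "inj_on (rg G) A" "inj_on (sr G) A"
      using compact_open_bisection_basis[OF open_c_fibre[of "c \<eta>"]] by blast
    note t = indicator_triple[OF A(1,2,5,6,3,4)]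
    then have "psi (Tr `` {((indicator A, indicator (iv G ` A)), c \<eta>, sr G \<eta>)}) = \<eta>"
      using psi_class by simp
    moreover have "Tr `` {((indicator A, indicator (iv G ` A)), c \<eta>, sr G \<eta>)} \<in> W"
      using t(1) by (rule quotientI)
    ultimately show ?thesis by (metis imageI)
  qed
  ultimately show ?thesis unfolding bij_betw_def by blast
qed

lemma psi_in_fsupp:
  assumes "((m,n),g,x) \<in> T"
  shows "psi (Tr `` {((m,n),g,x)}) \<in> fsupp m" "sr G (psi (Tr `` {((m,n),g,x)})) = x"
  using psi_class[OF assms] Tset_supp_lift[OF assms] by simp_all

lemma psi_indicator:
  assumes "cobis G A" "\<eta> \<in> A" "c ` A = {c \<eta>}"
  shows "((indicator A, indicator (iv G ` A)), c \<eta>, sr G \<eta>) \<in> T"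
    and "psi (Tr `` {((indicator A, indicator (iv G ` A)), c \<eta>, sr G \<eta>)}) = \<eta>"
proof -
  have "A \<subseteq> c -` {c \<eta>}" using assms(3) by auto
  note t = indicator_triple[OF cobisD[OF assms(1)] assms(2) this]
  show "((indicator A, indicator (iv G ` A)), c \<eta>, sr G \<eta>) \<in> T" using t(1) .
  show "psi (Tr `` {((indicator A, indicator (iv G ` A)), c \<eta>, sr G \<eta>)}) = \<eta>"
    using psi_class[OF t(1)] t(2) by simp
qed

lemma iv_psi:
  assumes t: "((m,n),g,x) \<in> T"
  shows "iv G (psi (Tr `` {((m,n),g,x)})) = psi (Tr `` {((n,m), - g, alpha G (fsupp m) x)})"
proof -
  define \<eta> where "\<eta> = supp_lift m x"
  have \<eta>: "m \<eta> \<noteq> 0" "sr G \<eta> = x" using Tset_supp_lift[OF t] unfolding \<eta>_def by auto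
  have "fsupp n = iv G ` fsupp m"
    using Tset_bisection_normaliser[OF t] unfolding bisection_normaliser_def by blast
  moreover have "iv G \<eta> \<in> iv G ` fsupp m" using \<eta>(1) by simp
  moreover have "inj_on (sr G) (fsupp n)"
    using bisection_normaliser_swap[OF Tset_bisection_normaliser[OF t]]
    unfolding bisection_normaliser_def by blast
  ultimately have n: "inj_on (sr G) (fsupp n)" "n (iv G \<eta>) \<noteq> 0" by auto
  have alpha: "alpha G (fsupp m) x = sr G (iv G \<eta>)" by (simp add: alpha_fsupp \<eta>_def)
  have "iv G \<eta> \<in> fsupp n" using n(2) by simp
  then have "alpha G (fsupp m) x \<in> sr G ` fsupp n" unfolding alpha by (rule imageI)
  then have t': "((n,m), - g, alpha G (fsupp m) x) \<in> T"
    using t by (simp add: normalisers_swap)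
  have "germ ((n,m), - g, alpha G (fsupp m) x) = iv G \<eta>"
    using supp_lift_eq[OF n(1)] n(2) alpha by simp
  then show ?thesis using psi_class[OF t] psi_class[OF t'] \<eta>_def by simp
qed

lemma rg_psi:
  assumes "((m,n),g,x) \<in> T"
  shows "rg G (psi (Tr `` {((m,n),g,x)})) = alpha G (fsupp m) x"
  using psi_class[OF assms] by (simp add: alpha_fsupp)

lemma psi_mu:
  assumes t1: "((m1,n1),g1,x1) \<in> T" and t2: "((m2,n2),g2,x2) \<in> T"
    and comp: "x1 = alpha G (fsupp m2) x2"
  shows "((conv G m1 m2, conv G n2 n1), g1 + g2, x2) \<in> T"
    and "mu G (psi (Tr `` {((m1,n1),g1,x1)})) (psi (Tr `` {((m2,n2),g2,x2)}))
           = psi (Tr `` {((conv G m1 m2, conv G n2 n1), g1 + g2, x2)})"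
proof -
  define \<eta>1 \<eta>2 where "\<eta>1 = supp_lift m1 x1" and "\<eta>2 = supp_lift m2 x2"
  have \<eta>1: "m1 \<eta>1 \<noteq> 0" "sr G \<eta>1 = x1" and \<eta>2: "m2 \<eta>2 \<noteq> 0" "sr G \<eta>2 = x2"
    using Tset_supp_lift[OF t1] Tset_supp_lift[OF t2] unfolding \<eta>1_def \<eta>2_def by auto
  have \<eta>12: "sr G \<eta>1 = rg G \<eta>2" using \<eta>1(2) comp by (simp add: alpha_fsupp \<eta>2_def)
  have b1: "bisection_normaliser m1 n1" and b2: "bisection_normaliser m2 n2"
    using Tset_bisection_normaliser t1 t2 by blast+
  have b: "bisection_normaliser (conv G m1 m2) (conv G n2 n1)"
    using bisection_normaliser_conv[OF b1 b2] .
  have inj: "inj_on (rg G) (fsupp m1)" "inj_on (rg G) (fsupp n2)" "inj_on (sr G) (fsupp (conv G m1 m2))"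
    using b1 bisection_normaliser_swap[OF b2] b unfolding bisection_normaliser_def by auto
  have "conv G m1 m2 (mu G \<eta>1 \<eta>2) = m1 \<eta>1 * m2 \<eta>2" using conv_at_mu[OF inj(1) \<eta>1(1) \<eta>12] .
  then have supp: "mu G \<eta>1 \<eta>2 \<in> fsupp (conv G m1 m2)" using \<eta>1(1) \<eta>2(1) by simp
  have sr12: "sr G (mu G \<eta>1 \<eta>2) = x2" using \<eta>12 \<eta>2(2) by (simp add: sr_mu)
  have h: "m1 \<in> homog G c g1" "n1 \<in> homog G c (- g1)" "m2 \<in> homog G c g2" "n2 \<in> homog G c (- g2)"
    using t1 t2 by (simp_all add: normalisers_def)
  have "conv G m1 m2 \<in> homog G c (g1 + g2)" "conv G n2 n1 \<in> homog G c (- g2 + - g1)"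
    using homog_conv[OF h(1,3) inj(1)] homog_conv[OF h(4,2) inj(2)] .
  moreover have "- g2 + - g1 = - (g1 + g2)" by (simp add: minus_add)
  ultimately have "conv G m1 m2 \<in> homog G c (g1 + g2)" "conv G n2 n1 \<in> homog G c (- (g1 + g2))"
    by simp_all
  then show t: "((conv G m1 m2, conv G n2 n1), g1 + g2, x2) \<in> T"
    using bisection_normaliser_imp_normaliser[OF b] supp sr12
    by (auto simp: normalisers_def intro: rev_image_eqI)
  have "germ ((conv G m1 m2, conv G n2 n1), g1 + g2, x2) = mu G \<eta>1 \<eta>2"
    using supp_lift_eq[OF inj(3) supp sr12] by simp
  then show "mu G (psi (Tr `` {((m1,n1),g1,x1)})) (psi (Tr `` {((m2,n2),g2,x2)}))
      = psi (Tr `` {((conv G m1 m2, conv G n2 n1), g1 + g2, x2)})"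
    using psi_class[OF t1] psi_class[OF t2] psi_class[OF t] \<eta>1_def \<eta>2_def by simp
qed

lemma c_psi:
  assumes "((m,n),g,x) \<in> T"
  shows "c (psi (Tr `` {((m,n),g,x)})) = g"
  using psi_in_fsupp(1)[OF assms] assms by (auto simp: normalisers_def homog_iff)

lemma psi_vimage_cobis:
  assumes A: "cobis G A" "A \<subseteq> c -` {g}"
  shows "psi -` A \<inter> W = {w \<in> W. \<exists>m n x. ((m,n),g,x) \<in> T \<and> w = Tr `` {((m,n),g,x)} \<and> fsupp m \<subseteq> A}"
proof (intro equalityI subsetI)
  fix w assume w: "w \<in> psi -` A \<inter> W"
  define \<eta> where "\<eta> = psi w"
  have "\<eta> \<in> A" using w unfolding \<eta>_def by simp
  then have "c \<eta> = g" "c ` A = {c \<eta>}" using A(2) by auto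
  note t = psi_indicator[OF A(1) \<open>\<eta> \<in> A\<close> this(2)]
  have "Tr `` {((indicator A, indicator (iv G ` A)), c \<eta>, sr G \<eta>)} = w"
    using bij_psi quotientI[OF t(1)] w t(2) unfolding \<eta>_def bij_betw_def by (auto dest: inj_onD)
  then show "w \<in> {w \<in> W. \<exists>m n x. ((m,n),g,x) \<in> T \<and> w = Tr `` {((m,n),g,x)} \<and> fsupp m \<subseteq> A}"
    using t(1) w \<open>c \<eta> = g\<close> by force
next
  fix w assume "w \<in> {w \<in> W. \<exists>m n x. ((m,n),g,x) \<in> T \<and> w = Tr `` {((m,n),g,x)} \<and> fsupp m \<subseteq> A}"
  then obtain m n x where "w \<in> W" "((m,n),g,x) \<in> T" "w = Tr `` {((m,n),g,x)}" "fsupp m \<subseteq> A"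
    by blast
  then show "w \<in> psi -` A \<inter> W" using psi_in_fsupp(1) by auto
qed

end

theorem mainTheorem4:
  fixes G :: "('g::t2_space) gpd" and c :: "'g \<Rightarrow> 'a::group_add"
  assumes "classC G c TYPE('r::idom)"
  shows "equiv (Tset G c :: ((('g \<Rightarrow> 'r) \<times> ('g \<Rightarrow> 'r)) \<times> 'a \<times> 'g) set) (Trel G c)
   \<and> (\<exists>\<psi>. bij_betw \<psi> ((Tset G c :: ((('g \<Rightarrow> 'r) \<times> ('g \<Rightarrow> 'r)) \<times> 'a \<times> 'g) set) // Trel G c) UNIV
      \<and> (\<forall>m n g x. ((m,n),g,x) \<in> (Tset G c :: ((('g \<Rightarrow> 'r) \<times> ('g \<Rightarrow> 'r)) \<times> 'a \<times> 'g) set) \<longrightarrow>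
            \<psi> (Trel G c `` {((m,n),g,x)}) \<in> fsupp m
          \<and> sr G (\<psi> (Trel G c `` {((m,n),g,x)})) = x)
      \<and> (\<forall>\<eta> A. cobis G A \<and> \<eta> \<in> A \<and> c ` A = {c \<eta>} \<longrightarrow>
            ((indicator A :: 'g \<Rightarrow> 'r, indicator (iv G ` A) :: 'g \<Rightarrow> 'r), c \<eta>, sr G \<eta>) \<in> Tset G c
          \<and> \<psi> (Trel G c `` {((indicator A :: 'g \<Rightarrow> 'r, indicator (iv G ` A)), c \<eta>, sr G \<eta>)}) = \<eta>)
      \<and> (\<forall>m n g x. ((m,n),g,x) \<in> (Tset G c :: ((('g \<Rightarrow> 'r) \<times> ('g \<Rightarrow> 'r)) \<times> 'a \<times> 'g) set) \<longrightarrow>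
            iv G (\<psi> (Trel G c `` {((m,n),g,x)}))
              = \<psi> (Trel G c `` {((n,m), - g, alpha G (fsupp m) x)}))
      \<and> (\<forall>m1 n1 g1 x1 m2 n2 g2 x2.
            ((m1,n1),g1,x1) \<in> (Tset G c :: ((('g \<Rightarrow> 'r) \<times> ('g \<Rightarrow> 'r)) \<times> 'a \<times> 'g) set)
          \<and> ((m2,n2),g2,x2) \<in> (Tset G c :: ((('g \<Rightarrow> 'r) \<times> ('g \<Rightarrow> 'r)) \<times> 'a \<times> 'g) set) \<longrightarrow>
            (sr G (\<psi> (Trel G c `` {((m1,n1),g1,x1)})) = rg G (\<psi> (Trel G c `` {((m2,n2),g2,x2)}))
               \<longleftrightarrow> x1 = alpha G (fsupp m2) x2)
          \<and> (x1 = alpha G (fsupp m2) x2 \<longrightarrow>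
               ((conv G m1 m2, conv G n2 n1), g1 + g2, x2) \<in> Tset G c
             \<and> mu G (\<psi> (Trel G c `` {((m1,n1),g1,x1)})) (\<psi> (Trel G c `` {((m2,n2),g2,x2)}))
                 = \<psi> (Trel G c `` {((conv G m1 m2, conv G n2 n1), g1 + g2, x2)})))
      \<and> (\<forall>m n g x. ((m,n),g,x) \<in> (Tset G c :: ((('g \<Rightarrow> 'r) \<times> ('g \<Rightarrow> 'r)) \<times> 'a \<times> 'g) set) \<longrightarrow>
            c (\<psi> (Trel G c `` {((m,n),g,x)})) = g)
      \<and> (\<forall>g A. cobis G A \<and> A \<subseteq> c -` {g} \<longrightarrow>
            \<psi> -` A \<inter> ((Tset G c :: ((('g \<Rightarrow> 'r) \<times> ('g \<Rightarrow> 'r)) \<times> 'a \<times> 'g) set) // Trel G c)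
              = {w \<in> (Tset G c :: ((('g \<Rightarrow> 'r) \<times> ('g \<Rightarrow> 'r)) \<times> 'a \<times> 'g) set) // Trel G c.
                   \<exists>m n x. ((m,n),g,x) \<in> (Tset G c :: ((('g \<Rightarrow> 'r) \<times> ('g \<Rightarrow> 'r)) \<times> 'a \<times> 'g) set)
                         \<and> w = Trel G c `` {((m,n),g,x)} \<and> fsupp m \<subseteq> A}))"
proof -
  interpret classC_groupoid G c "TYPE('r)" by unfold_locales (rule assms)
  show ?thesis
    by (intro conjI exI[of _ psi] allI impI; (elim conjE)?)
      (simp_all del: Tset_iff fsupp_iff add: equiv_Trel bij_psi psi_in_fsupp psi_indicator iv_psi rg_psi
        psi_mu c_psi psi_vimage_cobis)
qed

end
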